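(* Let $\beta\ge0$ and let $M_n=\sum_{i=1}^n\sigma(i)$ be the magnetization under the Ising measure $\mathbb{I}_{0,\beta}$ (zero external field). Then $M_n/n^{1/4}$ converges in the complex mod-Gaussian sense with parameters $t_n=n^{1/2}e^{2\beta}$ and limiting function $\psi(z)=\exp\!\big(-\tfrac{3e^{6\beta}-e^{2\beta}}{24}z^4\big)$, i.e. $$\mathbb{E}_{0,\beta}\!\left[e^{zM_n/n^{1/4}}\right]e^{-n^{1/2}e^{2\beta}z^2/2}\longrightarrow \exp\!\Big(-\tfrac{3e^{6\beta}-e^{2\beta}}{24}z^4\Big)$$ locally uniformly for $z$ in compact subsets of $\mathbb{C}$.
   Context: The Ising measure $\mathbb{I}_{\alpha,\beta}$ on spin configurations $\sigma:\{1,\dots,n\}\to\{\pm1\}$ gives to $\sigma$ probability proportional to $\exp\big(\alpha\sum_{i=1}^n\sigma(i)+\beta\sum_{i=1}^{n-1}\sigma(i)\sigma(i+1)\big)$; here $\alpha=0$. *)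

theory Defs
  imports "HOL-Analysis.Analysis"
begin

text \<open>Spin configurations on {1,...,n}: functions sigma with sigma i in {-1,1} for
  i in {1..n} and the default value (undefined) outside.\<close>
definition spin_configs :: "nat \<Rightarrow> (nat \<Rightarrow> real) set" where
  "spin_configs n = PiE {1..n} (\<lambda>_. {-1, 1})"

definition ising_weight :: "real \<Rightarrow> real \<Rightarrow> nat \<Rightarrow> (nat \<Rightarrow> real) \<Rightarrow> real" where
  "ising_weight \<alpha> \<beta> n \<sigma> =
     exp (\<alpha> * (\<Sum>i=1..n. \<sigma> i) + \<beta> * (\<Sum>i=1..n-1. \<sigma> i * \<sigma> (i+1)))"

definition ising_Z :: "real \<Rightarrow> real \<Rightarrow> nat \<Rightarrow> real" where
  "ising_Z \<alpha> \<beta> n = (\<Sum>\<sigma>\<in>spin_configs n. ising_weight \<alpha> \<beta> n \<sigma>)"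

definition ising_expect :: "real \<Rightarrow> real \<Rightarrow> nat \<Rightarrow> ((nat \<Rightarrow> real) \<Rightarrow> complex) \<Rightarrow> complex" where
  "ising_expect \<alpha> \<beta> n X =
     (\<Sum>\<sigma>\<in>spin_configs n. of_real (ising_weight \<alpha> \<beta> n \<sigma>) * X \<sigma>) / of_real (ising_Z \<alpha> \<beta> n)"

definition magnetization :: "nat \<Rightarrow> (nat \<Rightarrow> real) \<Rightarrow> real" where
  "magnetization n \<sigma> = (\<Sum>i=1..n. \<sigma> i)"

end

theory Submission
  imports Defs "HOL-Real_Asymp.Real_Asymp"
begin

(* Write the moment generating function E[exp (h M_n)] as a ratio of partition
   functions with complex field h.  The transfer-matrix recursion makes the partition function
   a two-term power sum A(h) L+(h)^(n-1) + B(h) L-(h)^(n-1), where L+ and L- are the eigenvalues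
   e^\<beta> cosh h +- sqrt (e^(2\<beta>) sinh^2 h + e^(-2\<beta>)).  Normalising L+ by its value at h = 0 gives
   eig_ratio, which a Taylor expansion shows to be exp (r h^2/2 + (r - 3 r^3) h^4/24) (1 + O(h^6))
   with r = e^(2\<beta>).  With h = z n^(-1/4) the normalised generating function times the Gaussian
   correction factorises into four terms: A/2 -> 1, (1 + O(h^6))^(n-1) -> 1, an exponential whose
   exponent tends to (r - 3 r^3) z^4/24, and 1 + (B/A) (L-/L+)^(n-1) -> 1, each uniformly on
   compact sets. *)

definition bigo0 :: "(complex \<Rightarrow> complex) \<Rightarrow> nat \<Rightarrow> bool" where
  "bigo0 f k \<longleftrightarrow>
     (\<exists>C \<epsilon>. C \<ge> 0 \<and> \<epsilon> > 0 \<and> (\<forall>h. norm h \<le> \<epsilon> \<longrightarrow> norm (f h) \<le> C * norm h ^ k))"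

lemma bigo0I:
  "C \<ge> 0 \<Longrightarrow> \<epsilon> > 0 \<Longrightarrow> (\<And>h. norm h \<le> \<epsilon> \<Longrightarrow> norm (f h) \<le> C * norm h ^ k) \<Longrightarrow> bigo0 f k"
  unfolding bigo0_def by blast

lemma bigo0_const: "bigo0 (\<lambda>_. c) 0"
  by (rule bigo0I[of "norm c" 1]) auto

lemma bigo0_id: "bigo0 (\<lambda>h. h) 1"
  by (rule bigo0I[of 1 1]) auto

lemma bigo0_cong: "bigo0 f k \<Longrightarrow> (\<And>h. f h = g h) \<Longrightarrow> bigo0 g k"
  unfolding bigo0_def by simp

lemma bigo0_cong_near:
  assumes "bigo0 f k" "e > 0" "\<And>h. norm h \<le> e \<Longrightarrow> f h = g h"
  shows "bigo0 g k"
proof -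
  obtain C d where 1: "C \<ge> 0" "d > 0" "\<And>h. norm h \<le> d \<Longrightarrow> norm (f h) \<le> C * norm h ^ k"
    using assms(1) unfolding bigo0_def by blast
  show ?thesis
  proof (rule bigo0I[of C "min d e"])
    fix h :: complex assume "norm h \<le> min d e"
    then show "norm (g h) \<le> C * norm h ^ k" using 1(3)[of h] assms(3)[of h] by simp
  qed (use 1 assms in auto)
qed

lemma bigo0_add:
  assumes "bigo0 f k" "bigo0 g k" shows "bigo0 (\<lambda>h. f h + g h) k"
proof -
  obtain C1 e1 where 1: "C1 \<ge> 0" "e1 > 0" "\<And>h. norm h \<le> e1 \<Longrightarrow> norm (f h) \<le> C1 * norm h ^ k"
    using assms(1) unfolding bigo0_def by blast
  obtain C2 e2 where 2: "C2 \<ge> 0" "e2 > 0" "\<And>h. norm h \<le> e2 \<Longrightarrow> norm (g h) \<le> C2 * norm h ^ k"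
    using assms(2) unfolding bigo0_def by blast
  show ?thesis
  proof (rule bigo0I[of "C1 + C2" "min e1 e2"])
    fix h :: complex assume "norm h \<le> min e1 e2"
    then have "norm (f h) \<le> C1 * norm h ^ k" "norm (g h) \<le> C2 * norm h ^ k" using 1 2 by auto
    then show "norm (f h + g h) \<le> (C1 + C2) * norm h ^ k"
      using norm_triangle_ineq[of "f h" "g h"] by (simp add: algebra_simps)
  qed (use 1 2 in auto)
qed

lemma bigo0_minus: "bigo0 f k \<Longrightarrow> bigo0 (\<lambda>h. - f h) k"
  unfolding bigo0_def by simp

lemma bigo0_diff: "bigo0 f k \<Longrightarrow> bigo0 g k \<Longrightarrow> bigo0 (\<lambda>h. f h - g h) k"
  using bigo0_add[of f k "\<lambda>h. - g h"] bigo0_minus[of g k] by simp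

lemma bigo0_mult:
  assumes "bigo0 f a" "bigo0 g b" "k = a + b" shows "bigo0 (\<lambda>h. f h * g h) k"
proof -
  obtain C1 e1 where 1: "C1 \<ge> 0" "e1 > 0" "\<And>h. norm h \<le> e1 \<Longrightarrow> norm (f h) \<le> C1 * norm h ^ a"
    using assms(1) unfolding bigo0_def by blast
  obtain C2 e2 where 2: "C2 \<ge> 0" "e2 > 0" "\<And>h. norm h \<le> e2 \<Longrightarrow> norm (g h) \<le> C2 * norm h ^ b"
    using assms(2) unfolding bigo0_def by blast
  show ?thesis
  proof (rule bigo0I[of "C1 * C2" "min e1 e2"])
    fix h :: complex assume "norm h \<le> min e1 e2"
    then have "norm (f h) * norm (g h) \<le> (C1 * norm h ^ a) * (C2 * norm h ^ b)"
      using 1 2 by (intro mult_mono) auto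
    then show "norm (f h * g h) \<le> (C1 * C2) * norm h ^ k"
      by (simp add: assms(3) norm_mult power_add mult_ac)
  qed (use 1 2 in auto)
qed

lemma bigo0_mono:
  assumes "bigo0 f k" "j \<le> k" shows "bigo0 f j"
proof -
  obtain C e where 1: "C \<ge> 0" "e > 0" "\<And>h. norm h \<le> e \<Longrightarrow> norm (f h) \<le> C * norm h ^ k"
    using assms(1) unfolding bigo0_def by blast
  show ?thesis
  proof (rule bigo0I[of C "min e 1"])
    fix h :: complex assume h: "norm h \<le> min e 1"
    have "norm h ^ k \<le> norm h ^ j" using h assms(2) by (intro power_decreasing) auto
    then show "norm (f h) \<le> C * norm h ^ j" using 1(3)[of h] h 1(1)
      by (meson min.boundedE mult_left_mono order_trans)
  qed (use 1 in auto)
qed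

lemma bigo0_power: "bigo0 f a \<Longrightarrow> bigo0 (\<lambda>h. f h ^ m) (a * m)"
proof (induction m)
  case 0 then show ?case using bigo0_const[of 1] by simp
next
  case (Suc m)
  then have "bigo0 (\<lambda>h. f h * f h ^ m) (a * Suc m)" by (intro bigo0_mult) auto
  then show ?case by simp
qed

lemma bigo0_monom: "bigo0 (\<lambda>h. a * h ^ n) n"
  using bigo0_mult[OF bigo0_const[of a] bigo0_power[OF bigo0_id, of n]] by simp

lemma bigo0_small:
  assumes "bigo0 f k" "k \<ge> 1" "e > 0"
  obtains \<epsilon> where "\<epsilon> > 0" "\<And>h. norm h \<le> \<epsilon> \<Longrightarrow> norm (f h) \<le> e"
proof -
  obtain C \<epsilon> where 1: "C \<ge> 0" "\<epsilon> > 0" "\<And>h. norm h \<le> \<epsilon> \<Longrightarrow> norm (f h) \<le> C * norm h ^ 1"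
  proof -
    have "bigo0 f 1" using bigo0_mono[OF assms(1)] assms(2) by simp
    then show ?thesis using that unfolding bigo0_def by auto
  qed
  define d where "d = min \<epsilon> (e / (C + 1))"
  have d: "d > 0" using 1 assms by (auto simp: d_def)
  show ?thesis
  proof (rule that[OF d])
    fix h :: complex assume h: "norm h \<le> d"
    have "norm (f h) \<le> C * norm h" using 1(3)[of h] h by (auto simp: d_def)
    also have "\<dots> \<le> (C + 1) * (e / (C + 1))"
      using h 1(1) by (intro mult_mono) (auto simp: d_def)
    also have "\<dots> = e" using 1(1) by simp
    finally show "norm (f h) \<le> e" .
  qed
qed

lemma bigo0_bounded_below:
  assumes "bigo0 (\<lambda>h. g h - g0) 1" "g0 \<noteq> 0"
  obtains \<epsilon> where "\<epsilon> > 0" "\<And>h. norm h \<le> \<epsilon> \<Longrightarrow> norm (g h) \<ge> norm g0 / 2"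
proof -
  obtain \<epsilon> where e: "\<epsilon> > 0" "\<And>h. norm h \<le> \<epsilon> \<Longrightarrow> norm (g h - g0) \<le> norm g0 / 2"
    using bigo0_small[OF assms(1), of "norm g0 / 2"] assms(2) by auto
  show ?thesis
  proof (rule that[OF e(1)])
    fix h :: complex assume "norm h \<le> \<epsilon>"
    then have "norm (g h - g0) \<le> norm g0 / 2" by (rule e(2))
    then show "norm (g h) \<ge> norm g0 / 2"
      using norm_triangle_ineq2[of g0 "g0 - g h"] by (simp add: norm_minus_commute)
  qed
qed

lemma bigo0_divide:
  assumes "bigo0 f k" "m > 0" "\<epsilon> > 0" "\<And>h. norm h \<le> \<epsilon> \<Longrightarrow> norm (g h) \<ge> m"
  shows "bigo0 (\<lambda>h. f h / g h) k"
proof -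
  obtain C e where 1: "C \<ge> 0" "e > 0" "\<And>h. norm h \<le> e \<Longrightarrow> norm (f h) \<le> C * norm h ^ k"
    using assms(1) unfolding bigo0_def by blast
  show ?thesis
  proof (rule bigo0I[of "C / m" "min e \<epsilon>"])
    fix h :: complex assume h: "norm h \<le> min e \<epsilon>"
    have g: "norm (g h) \<ge> m" using assms(4) h by auto
    have "norm (f h / g h) = norm (f h) / norm (g h)" by (simp add: norm_divide)
    also have "\<dots> \<le> (C * norm h ^ k) / m"
      using 1(3)[of h] h g assms(2) 1(1) by (intro frac_le) (auto simp: zero_le_mult_iff)
    finally show "norm (f h / g h) \<le> C / m * norm h ^ k" by simp
  qed (use 1 assms in auto)
qed

lemma bigo0_rescale: "bigo0 f k \<Longrightarrow> bigo0 (\<lambda>h. f (c * h)) k"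
proof -
  assume "bigo0 f k"
  then obtain C e where 1: "C \<ge> 0" "e > 0" "\<And>h. norm h \<le> e \<Longrightarrow> norm (f h) \<le> C * norm h ^ k"
    unfolding bigo0_def by blast
  show ?thesis
  proof (rule bigo0I[of "C * norm c ^ k" "e / (norm c + 1)"])
    fix h :: complex assume h: "norm h \<le> e / (norm c + 1)"
    have "norm c * norm h \<le> (norm c + 1) * (e / (norm c + 1))"
      using h by (intro mult_mono) auto
    then have "norm (c * h) \<le> e"
      using add_pos_nonneg[of 1 "norm c"] by (simp add: norm_mult)
    then have "norm (f (c * h)) \<le> C * norm (c * h) ^ k" by (rule 1(3))
    then show "norm (f (c * h)) \<le> C * norm c ^ k * norm h ^ k"
      by (simp add: norm_mult power_mult_distrib mult_ac)
  qed (use 1 add_pos_nonneg[of 1 "norm c"] in auto)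
qed

(* Taylor estimates for exp, cosh and the principal square root. *)

lemma exp_taylor_remainder:
  fixes w :: complex
  shows "norm (exp w - (\<Sum>n<k. w ^ n / of_real (fact n))) \<le> norm w ^ k * exp (norm w)"
proof -
  have e: "exp w = (\<Sum>n<k. inverse (fact n) *\<^sub>R w ^ n) + (\<Sum>n. inverse (fact (n + k)) *\<^sub>R w ^ (n + k))"
    by (rule exp_first_terms)
  have s: "(\<Sum>n<k. inverse (fact n) *\<^sub>R w ^ n) = (\<Sum>n<k. w ^ n / of_real (fact n))"
    by (simp add: scaleR_conv_of_real divide_inverse mult.commute)
  have "norm (\<Sum>n. inverse (fact (n + k)) *\<^sub>R w ^ (n + k)) \<le> (\<Sum>n. norm w ^ k * (norm w ^ n /\<^sub>R fact n))"
  proof (rule norm_suminf_le)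
    fix n
    have "norm (inverse (fact (n + k)) *\<^sub>R w ^ (n + k)) = norm w ^ k * norm w ^ n / fact (n + k)"
      by (simp add: norm_power norm_mult power_add divide_inverse mult_ac)
    also have "\<dots> \<le> norm w ^ k * norm w ^ n / fact n"
      by (intro divide_left_mono) (auto simp: fact_mono)
    finally show "norm (inverse (fact (n + k)) *\<^sub>R w ^ (n + k)) \<le> norm w ^ k * (norm w ^ n /\<^sub>R fact n)"
      by (simp add: divide_inverse mult_ac)
  next
    show "summable (\<lambda>n. norm w ^ k * (norm w ^ n /\<^sub>R fact n))"
      by (intro summable_mult summable_exp_generic)
  qed
  also have "\<dots> = norm w ^ k * exp (norm w)"
    using exp_converges[of "norm w"] by (simp add: sums_iff suminf_mult)
  finally show ?thesis using e s by simp
qed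

lemma bigo0_exp_taylor2:
  assumes "bigo0 E k" "k \<ge> 1"
  shows "bigo0 (\<lambda>h. exp (E h) - (1 + E h + E h ^ 2 / 2)) (3 * k)"
proof -
  obtain C e where 1: "C \<ge> 0" "e > 0" "\<And>h. norm h \<le> e \<Longrightarrow> norm (E h) \<le> C * norm h ^ k"
    using assms(1) unfolding bigo0_def by blast
  obtain d where d: "d > 0" "\<And>h. norm h \<le> d \<Longrightarrow> norm (E h) \<le> 1"
    using bigo0_small[OF assms, of 1] by auto
  show ?thesis
  proof (rule bigo0I[of "C ^ 3 * exp 1" "min e d"])
    fix h :: complex assume h: "norm h \<le> min e d"
    have "norm (exp (E h) - (1 + E h + E h ^ 2 / 2)) \<le> norm (E h) ^ 3 * exp (norm (E h))"
      using exp_taylor_remainder[of "E h" 3] by (simp add: eval_nat_numeral)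
    also have "\<dots> \<le> (C * norm h ^ k) ^ 3 * exp 1"
      using 1(3)[of h] d(2)[of h] h 1(1) by (intro mult_mono power_mono) (auto simp: zero_le_mult_iff)
    finally show "norm (exp (E h) - (1 + E h + E h ^ 2 / 2)) \<le> C ^ 3 * exp 1 * norm h ^ (3 * k)"
      by (simp add: power_mult_distrib power_mult mult_ac)
  qed (use 1 d in auto)
qed

definition cosh_poly :: "complex \<Rightarrow> complex" where
  "cosh_poly h = 1 + h ^ 2 / 2 + h ^ 4 / 24"

lemma bigo0_cosh_taylor: "bigo0 (\<lambda>h. cosh h - cosh_poly h) 6"
proof (rule bigo0I[of "exp 1" 1])
  fix h :: complex assume h: "norm h \<le> 1"
  have a: "norm (exp h - (\<Sum>n<6. h ^ n / of_real (fact n))) \<le> norm h ^ 6 * exp (norm h)"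
    by (rule exp_taylor_remainder)
  have b: "norm (exp (-h) - (\<Sum>n<6. (-h) ^ n / of_real (fact n))) \<le> norm h ^ 6 * exp (norm h)"
    using exp_taylor_remainder[of "-h" 6] by simp
  have eq: "cosh h - cosh_poly h =
     ((exp h - (\<Sum>n<6. h ^ n / of_real (fact n))) + (exp (-h) - (\<Sum>n<6. (-h) ^ n / of_real (fact n)))) / 2"
    by (simp add: cosh_field_def cosh_poly_def eval_nat_numeral fact_numeral lessThan_Suc)
  have "norm (cosh h - cosh_poly h) \<le> (norm h ^ 6 * exp (norm h) + norm h ^ 6 * exp (norm h)) / 2"
    unfolding eq norm_divide using norm_triangle_le[OF add_mono[OF a b]] by simp
  also have "\<dots> \<le> exp 1 * norm h ^ 6" using h by (simp add: mult_right_mono)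
  finally show "norm (cosh h - cosh_poly h) \<le> exp 1 * norm h ^ 6" .
qed auto

definition sqrt_poly :: "complex \<Rightarrow> complex" where
  "sqrt_poly y = 1 + y / 2 - y ^ 2 / 8"

text \<open>For the principal branch, csqrt (1 + x) + sqrt_poly x stays away from 0 when x is small,
  so the difference of the two quantities is controlled by the difference of their squares.\<close>
lemma csqrt_taylor:
  fixes x :: complex
  assumes x: "norm x \<le> 1/2"
  shows "norm (csqrt (1 + x) - sqrt_poly x) \<le> norm x ^ 3"
proof -
  define s where "s = csqrt (1 + x)"
  define P where "P = sqrt_poly x"
  have "Re P \<ge> 1 - norm x / 2 - norm x ^ 2 / 8"
  proof -
    have "Re x \<ge> - norm x" using abs_Re_le_cmod[of x] by linarith
    moreover have "Re (x ^ 2) \<le> norm x ^ 2" using complex_Re_le_cmod[of "x ^ 2"] by (simp add: norm_power)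
    ultimately show ?thesis by (simp add: P_def sqrt_poly_def)
  qed
  moreover have "norm x ^ 2 \<le> 1/4" using x power_mono[of "norm x" "1/2" 2] by (simp add: power_divide)
  ultimately have ReP: "Re P \<ge> 23/32" using x by linarith
  have "Re s \<ge> 0" unfolding s_def by (rule Re_csqrt)
  then have sP: "norm (s + P) \<ge> 23/32"
    using complex_Re_le_cmod[of "s + P"] ReP by simp
  have diff: "s - P = (x ^ 3 / 8 - x ^ 4 / 64) / (s + P)"
  proof -
    have "(s - P) * (s + P) = s ^ 2 - P ^ 2" by (simp add: algebra_simps power2_eq_square)
    also have "\<dots> = 1 + x - sqrt_poly x ^ 2" by (simp add: s_def P_def)
    also have "\<dots> = x ^ 3 / 8 - x ^ 4 / 64"
      by (simp add: sqrt_poly_def field_simps eval_nat_numeral)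
    finally show ?thesis using sP by (auto simp: eq_divide_eq)
  qed
  have "norm (x ^ 3 / 8 - x ^ 4 / 64) \<le> norm x ^ 3 / 8 + norm x ^ 4 / 64"
    using norm_triangle_ineq4[of "x ^ 3 / 8" "x ^ 4 / 64"] by (simp add: norm_power norm_divide)
  also have "\<dots> \<le> norm x ^ 3 * (23/32)"
  proof -
    have "norm x ^ 4 \<le> norm x ^ 3" using x by (intro power_decreasing) auto
    then show ?thesis using zero_le_power[OF norm_ge_zero[of x], of 3] by linarith
  qed
  finally have "norm (s - P) \<le> norm x ^ 3 * (23/32) / (23/32)"
    unfolding diff norm_divide using sP by (intro frac_le) auto
  then show ?thesis by (simp add: s_def P_def)
qed

lemma bigo0_csqrt_taylor:
  assumes "bigo0 x k" "k \<ge> 1"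
  shows "bigo0 (\<lambda>h. csqrt (1 + x h) - sqrt_poly (x h)) (3 * k)"
proof -
  obtain C e where 1: "C \<ge> 0" "e > 0" "\<And>h. norm h \<le> e \<Longrightarrow> norm (x h) \<le> C * norm h ^ k"
    using assms(1) unfolding bigo0_def by blast
  obtain d where d: "d > 0" "\<And>h. norm h \<le> d \<Longrightarrow> norm (x h) \<le> 1/2"
    using bigo0_small[OF assms, of "1/2"] by auto
  show ?thesis
  proof (rule bigo0I[of "C ^ 3" "min e d"])
    fix h :: complex assume h: "norm h \<le> min e d"
    have "norm (csqrt (1 + x h) - sqrt_poly (x h)) \<le> norm (x h) ^ 3"
      using d(2)[of h] h by (intro csqrt_taylor) auto
    also have "\<dots> \<le> (C * norm h ^ k) ^ 3"
      using 1(3)[of h] h by (intro power_mono) auto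
    finally show "norm (csqrt (1 + x h) - sqrt_poly (x h)) \<le> C ^ 3 * norm h ^ (3 * k)"
      by (simp add: power_mult_distrib power_mult mult_ac)
  qed (use 1 d in auto)
qed

(* The normalised leading eigenvalue.  For a parameter r (later r = exp (2 \<beta>)) put
   eig_ratio r h = (r cosh h + sqrt (1 + r^2 sinh^2 h)) / (r + 1); its logarithm agrees with
   the quartic cumulant polynomial r h^2/2 + (r - 3 r^3) h^4/24 up to order h^6. *)

definition disc_arg :: "complex \<Rightarrow> complex \<Rightarrow> complex" where
  "disc_arg r h = r ^ 2 * (cosh h ^ 2 - 1)"

definition disc :: "complex \<Rightarrow> complex \<Rightarrow> complex" where
  "disc r h = csqrt (1 + disc_arg r h)"

definition eig_ratio :: "complex \<Rightarrow> complex \<Rightarrow> complex" where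
  "eig_ratio r h = (r * cosh h + disc r h) / (r + 1)"

definition cumulant :: "complex \<Rightarrow> complex \<Rightarrow> complex" where
  "cumulant r h = r * h ^ 2 / 2 + (r - 3 * r ^ 3) / 24 * h ^ 4"

definition disc_arg_poly :: "complex \<Rightarrow> complex \<Rightarrow> complex" where
  "disc_arg_poly r h = r ^ 2 * (cosh_poly h ^ 2 - 1)"

lemma bigo0_cosh_poly_1: "bigo0 (\<lambda>h. cosh_poly h - 1) 2"
proof -
  have "bigo0 (\<lambda>h. (1/2) * h ^ 2 + (1/24) * h ^ 4) 2"
    by (intro bigo0_add bigo0_monom bigo0_mono[OF bigo0_monom]) auto
  then show ?thesis by (rule bigo0_cong) (simp add: cosh_poly_def)
qed

lemma bigo0_cosh_1: "bigo0 (\<lambda>h. cosh h - 1) 2"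
  using bigo0_add[OF bigo0_mono[OF bigo0_cosh_taylor, of 2] bigo0_cosh_poly_1] by simp

lemma bigo0_cosh: "bigo0 cosh 0"
  using bigo0_add[OF bigo0_mono[OF bigo0_cosh_1, of 0] bigo0_const[of 1]] by simp

lemma bigo0_cosh_poly: "bigo0 cosh_poly 0"
  using bigo0_add[OF bigo0_mono[OF bigo0_cosh_poly_1, of 0] bigo0_const[of 1]] by simp

lemma bigo0_disc_arg: "bigo0 (disc_arg r) 2"
proof -
  have "bigo0 (\<lambda>h. r ^ 2 * ((cosh h - 1) * (cosh h + 1))) 2"
    by (rule bigo0_mult[OF bigo0_const bigo0_mult[OF bigo0_cosh_1 bigo0_add[OF bigo0_cosh bigo0_const]]]) auto
  then show ?thesis by (rule bigo0_cong) (simp add: disc_arg_def algebra_simps power2_eq_square)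
qed

lemma bigo0_disc_arg_poly: "bigo0 (disc_arg_poly r) 2"
proof -
  have "bigo0 (\<lambda>h. r ^ 2 * ((cosh_poly h - 1) * (cosh_poly h + 1))) 2"
    by (rule bigo0_mult[OF bigo0_const bigo0_mult[OF bigo0_cosh_poly_1 bigo0_add[OF bigo0_cosh_poly bigo0_const]]]) auto
  then show ?thesis by (rule bigo0_cong) (simp add: disc_arg_poly_def algebra_simps power2_eq_square)
qed

lemma bigo0_disc_arg_taylor: "bigo0 (\<lambda>h. disc_arg r h - disc_arg_poly r h) 6"
proof -
  have "bigo0 (\<lambda>h. r ^ 2 * ((cosh h - cosh_poly h) * (cosh h + cosh_poly h))) 6"
    by (rule bigo0_mult[OF bigo0_const bigo0_mult[OF bigo0_cosh_taylor bigo0_add[OF bigo0_cosh bigo0_cosh_poly]]]) auto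
  then show ?thesis
    by (rule bigo0_cong) (simp add: disc_arg_def disc_arg_poly_def algebra_simps power2_eq_square)
qed

lemma bigo0_disc_sqrt_poly: "bigo0 (\<lambda>h. disc r h - sqrt_poly (disc_arg r h)) 6"
  using bigo0_csqrt_taylor[OF bigo0_disc_arg[of r]] unfolding disc_def by simp

lemma bigo0_sqrt_poly_disc_arg: "bigo0 (\<lambda>h. sqrt_poly (disc_arg r h) - sqrt_poly (disc_arg_poly r h)) 6"
proof -
  have "bigo0 (\<lambda>h. (disc_arg r h - disc_arg_poly r h) * (1/2 - (disc_arg r h + disc_arg_poly r h) / 8)) 6"
  proof (rule bigo0_mult[OF bigo0_disc_arg_taylor])
    have "bigo0 (\<lambda>h. (disc_arg r h + disc_arg_poly r h) * (1/8)) 0"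
      by (rule bigo0_mult[OF bigo0_add[OF bigo0_mono[OF bigo0_disc_arg] bigo0_mono[OF bigo0_disc_arg_poly]] bigo0_const]) auto
    then have "bigo0 (\<lambda>h. 1/2 - (disc_arg r h + disc_arg_poly r h) * (1/8)) 0"
      by (intro bigo0_diff bigo0_const)
    then show "bigo0 (\<lambda>h. 1/2 - (disc_arg r h + disc_arg_poly r h) / 8) 0" by (rule bigo0_cong) simp
  qed auto
  then show ?thesis by (rule bigo0_cong) (simp add: sqrt_poly_def field_simps power2_eq_square)
qed

lemma bigo0_disc_1: "bigo0 (\<lambda>h. disc r h - 1) 2"
proof -
  have "bigo0 (\<lambda>h. (disc r h - sqrt_poly (disc_arg r h))
                 + ((1/2) * disc_arg r h - (1/8) * disc_arg r h ^ 2)) 2"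
  proof (rule bigo0_add[OF bigo0_mono[OF bigo0_disc_sqrt_poly]])
    have "bigo0 (\<lambda>h. (1/8) * disc_arg r h ^ 2) 2"
      by (rule bigo0_mono[OF bigo0_mult[OF bigo0_const bigo0_power[OF bigo0_disc_arg]]]) auto
    then show "bigo0 (\<lambda>h. (1/2) * disc_arg r h - (1/8) * disc_arg r h ^ 2) 2"
      by (intro bigo0_diff bigo0_mult[OF bigo0_const bigo0_disc_arg]) auto
  qed auto
  then show ?thesis by (rule bigo0_cong) (simp add: sqrt_poly_def)
qed

lemma bigo0_cumulant: "bigo0 (cumulant r) 2"
proof -
  have "bigo0 (\<lambda>h. (r/2) * h ^ 2 + ((r - 3 * r ^ 3) / 24) * h ^ 4) 2"
    by (intro bigo0_add bigo0_monom bigo0_mono[OF bigo0_monom]) auto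
  then show ?thesis by (rule bigo0_cong) (simp add: cumulant_def)
qed

text \<open>The polynomial bookkeeping: after replacing cosh and csqrt by their Taylor polynomials,
  the numerator of eig_ratio and (r + 1) times the second-order Taylor polynomial of
  exp (cumulant r h) agree up to a multiple of h^6.\<close>
lemma eig_ratio_polynomial_identity:
  fixes h r :: complex
  shows "r * cosh_poly h + sqrt_poly (disc_arg_poly r h) - (r + 1) * (1 + cumulant r h + cumulant r h ^ 2 / 2)
   = h ^ 6 * (((-1/48) * r^3 + (-1/48) * r^4 + (1/16) * r^5)
       + ((-1/1152) * r^3 + (-11/576) * r^4 + (1/192) * r^5 + (-1/128) * r^6 + (-1/128) * r^7) * h^2
       + ((-1/256) * r^4) * h^4 + ((-5/13824) * r^4) * h^6 + ((-1/55296) * r^4) * h^8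
       + ((-1/2654208) * r^4) * h^10)"
  unfolding cosh_poly_def sqrt_poly_def disc_arg_poly_def cumulant_def
  by (simp add: field_simps eval_nat_numeral)

lemma bigo0_eig_ratio_exp_cumulant:
  assumes r: "r + 1 \<noteq> 0"
  shows "bigo0 (\<lambda>h. eig_ratio r h - exp (cumulant r h)) 6"
proof -
  define Q where "Q h = ((-1/48) * r^3 + (-1/48) * r^4 + (1/16) * r^5)
       + ((-1/1152) * r^3 + (-11/576) * r^4 + (1/192) * r^5 + (-1/128) * r^6 + (-1/128) * r^7) * h^2
       + ((-1/256) * r^4) * h^4 + ((-5/13824) * r^4) * h^6 + ((-1/55296) * r^4) * h^8
       + ((-1/2654208) * r^4) * h^10" for h
  have "bigo0 Q 0"
    unfolding Q_def by (intro bigo0_add bigo0_const bigo0_mono[OF bigo0_monom] le0)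
  then have poly: "bigo0 (\<lambda>h. h ^ 6 * Q h) 6"
    by (rule bigo0_mult[OF bigo0_power[OF bigo0_id]]) simp
  define D where "D h = r * (cosh h - cosh_poly h) + (disc r h - sqrt_poly (disc_arg r h))
      + (sqrt_poly (disc_arg r h) - sqrt_poly (disc_arg_poly r h)) + h ^ 6 * Q h" for h
  have "bigo0 (\<lambda>h. D h * (1 / (r + 1))) 6"
    unfolding D_def
    by (rule bigo0_mult[OF bigo0_add[OF bigo0_add[OF bigo0_add[OF bigo0_mult[OF bigo0_const bigo0_cosh_taylor]
          bigo0_disc_sqrt_poly] bigo0_sqrt_poly_disc_arg] poly] bigo0_const]) auto
  then have "bigo0 (\<lambda>h. D h * (1 / (r + 1)) - (exp (cumulant r h) - (1 + cumulant r h + cumulant r h ^ 2 / 2))) 6"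
    using bigo0_diff bigo0_exp_taylor2[OF bigo0_cumulant] by fastforce
  then show ?thesis
  proof (rule bigo0_cong)
    fix h
    have "D h = (r * cosh h + disc r h) - (r + 1) * (1 + cumulant r h + cumulant r h ^ 2 / 2)"
      using eig_ratio_polynomial_identity[of r h] by (simp add: D_def Q_def algebra_simps)
    then have "D h * (1 / (r + 1)) = eig_ratio r h - (1 + cumulant r h + cumulant r h ^ 2 / 2)"
      using r by (simp add: eig_ratio_def diff_divide_distrib)
    then show "D h * (1 / (r + 1)) - (exp (cumulant r h) - (1 + cumulant r h + cumulant r h ^ 2 / 2))
          = eig_ratio r h - exp (cumulant r h)"
      by simp
  qed
qed

lemma bigo0_eig_ratio_over_exp:
  assumes "r + 1 \<noteq> 0"
  shows "bigo0 (\<lambda>h. eig_ratio r h / exp (cumulant r h) - 1) 6"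
proof -
  obtain e where e: "e > 0" "\<And>h. norm h \<le> e \<Longrightarrow> norm (cumulant r h) \<le> 1"
    using bigo0_small[OF bigo0_cumulant, of 1] by auto
  have low: "norm (exp (cumulant r h)) \<ge> exp (-1)" if "norm h \<le> e" for h
  proof -
    have "Re (cumulant r h) \<ge> -1" using e(2)[OF that] abs_Re_le_cmod[of "cumulant r h"] by linarith
    then show ?thesis by simp
  qed
  have "bigo0 (\<lambda>h. (eig_ratio r h - exp (cumulant r h)) / exp (cumulant r h)) 6"
    by (rule bigo0_divide[OF bigo0_eig_ratio_exp_cumulant[OF assms] _ e(1) low]) auto
  then show ?thesis by (rule bigo0_cong) (simp add: field_simps)
qed

(* Transfer-matrix solution of the chain.  With a complex field h the partition function
   pfun \<beta> n h satisfies a two-term linear recurrence whose characteristic roots are the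
   eigenvalues eig_plus/eig_minus of the transfer matrix; hence it is a combination of their
   powers. *)

abbreviation bond_par :: "real \<Rightarrow> complex" where "bond_par \<beta> \<equiv> of_real (exp \<beta>)"
abbreviation bond_anti :: "real \<Rightarrow> complex" where "bond_anti \<beta> \<equiv> of_real (exp (-\<beta>))"
abbreviation bond_ratio :: "real \<Rightarrow> complex" where "bond_ratio \<beta> \<equiv> of_real (exp (2 * \<beta>))"

lemma sum_spin_configs_Suc:
  fixes g :: "(nat \<Rightarrow> real) \<Rightarrow> 'a::comm_monoid_add"
  shows "(\<Sum>\<sigma>\<in>spin_configs (Suc n). g \<sigma>) =
         (\<Sum>\<sigma>\<in>spin_configs n. g (\<sigma>(Suc n := -1)) + g (\<sigma>(Suc n := 1)))"
proof -
  have ins: "{1..Suc n} = insert (Suc n) {1..n}" by auto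
  have nin: "Suc n \<notin> {1..n}" by auto
  have "spin_configs (Suc n) = (\<lambda>(y, f). f(Suc n := y)) ` ({-1, 1::real} \<times> PiE {1..n} (\<lambda>_. {-1, 1}))"
    unfolding spin_configs_def ins PiE_insert_eq ..
  then have "(\<Sum>\<sigma>\<in>spin_configs (Suc n). g \<sigma>) =
      (\<Sum>\<sigma>\<in>{-1, 1::real} \<times> PiE {1..n} (\<lambda>_. {-1, 1}). g ((\<lambda>(y, f). f(Suc n := y)) \<sigma>))"
    using sum.reindex[OF inj_combinator[OF nin, of "\<lambda>_. {-1, 1::real}"], of g] by simp
  also have "\<dots> = (\<Sum>y\<in>{-1, 1::real}. \<Sum>f\<in>PiE {1..n} (\<lambda>_. {-1, 1}). g (f(Suc n := y)))"
    by (subst sum.cartesian_product) (simp add: case_prod_beta)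
  also have "\<dots> = (\<Sum>f\<in>spin_configs n. g (f(Suc n := -1)) + g (f(Suc n := 1)))"
    by (simp add: sum.distrib spin_configs_def)
  finally show ?thesis .
qed

definition config_weight :: "real \<Rightarrow> nat \<Rightarrow> complex \<Rightarrow> (nat \<Rightarrow> real) \<Rightarrow> complex" where
  "config_weight \<beta> n h \<sigma> =
     of_real (exp (\<beta> * (\<Sum>i=1..n-1. \<sigma> i * \<sigma> (i+1)))) * exp (h * of_real (\<Sum>i=1..n. \<sigma> i))"

definition pfun :: "real \<Rightarrow> nat \<Rightarrow> complex \<Rightarrow> complex" where
  "pfun \<beta> n h = (\<Sum>\<sigma>\<in>spin_configs n. config_weight \<beta> n h \<sigma>)"

text \<open>Partition function with an extra bond from the last spin to a ghost spin t.\<close>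
definition boundary_sum :: "real \<Rightarrow> nat \<Rightarrow> complex \<Rightarrow> real \<Rightarrow> complex" where
  "boundary_sum \<beta> n h t = (\<Sum>\<sigma>\<in>spin_configs n. config_weight \<beta> n h \<sigma> * of_real (exp (\<beta> * \<sigma> n * t)))"

lemma ising_expect_eq_pfun:
  "ising_expect 0 \<beta> n (\<lambda>\<sigma>. exp (z * of_real (magnetization n \<sigma> / t)))
     = pfun \<beta> n (z / of_real t) / pfun \<beta> n 0"
proof -
  have 1: "(\<Sum>\<sigma>\<in>spin_configs n. of_real (ising_weight 0 \<beta> n \<sigma>) * exp (z * of_real (magnetization n \<sigma> / t)))
      = pfun \<beta> n (z / of_real t)"
    unfolding pfun_def
    by (intro sum.cong refl) (simp add: ising_weight_def config_weight_def magnetization_def)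
  have 2: "of_real (ising_Z 0 \<beta> n) = pfun \<beta> n 0"
    unfolding pfun_def ising_Z_def of_real_sum
    by (intro sum.cong refl) (simp add: ising_weight_def config_weight_def)
  show ?thesis unfolding ising_expect_def 1 2 ..
qed

lemma config_weight_Suc:
  assumes "n \<ge> 1"
  shows "config_weight \<beta> (Suc n) h (\<sigma>(Suc n := y))
           = config_weight \<beta> n h \<sigma> * of_real (exp (\<beta> * \<sigma> n * y)) * exp (h * of_real y)"
proof -
  obtain m where m: "n = Suc m" using assms by (cases n) auto
  have bonds: "(\<Sum>i=1..Suc n - 1. (\<sigma>(Suc n := y)) i * (\<sigma>(Suc n := y)) (i+1)) =
        (\<Sum>i=1..n-1. \<sigma> i * \<sigma> (i+1)) + \<sigma> n * y"
  proof -
    have "(\<Sum>i=1..m. (\<sigma>(Suc n := y)) i * (\<sigma>(Suc n := y)) (i+1)) = (\<Sum>i=1..m. \<sigma> i * \<sigma> (i+1))"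
      using m by (intro sum.cong) auto
    then show ?thesis using m by simp
  qed
  have spins: "(\<Sum>i=1..Suc n. (\<sigma>(Suc n := y)) i) = (\<Sum>i=1..n. \<sigma> i) + y"
  proof -
    have "(\<Sum>i=1..n. (\<sigma>(Suc n := y)) i) = (\<Sum>i=1..n. \<sigma> i)" by (intro sum.cong) auto
    then show ?thesis by simp
  qed
  show ?thesis
    unfolding config_weight_def bonds spins by (simp add: distrib_left exp_add distrib_right mult_ac)
qed

lemma pfun_Suc:
  assumes "n \<ge> 1"
  shows "pfun \<beta> (Suc n) h = exp h * boundary_sum \<beta> n h 1 + exp (-h) * boundary_sum \<beta> n h (-1)"
  unfolding pfun_def boundary_sum_def sum_spin_configs_Suc config_weight_Suc[OF assms]
  by (simp add: sum_distrib_left sum.distrib algebra_simps)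

lemma boundary_sum_Suc:
  assumes "n \<ge> 1"
  shows "boundary_sum \<beta> (Suc n) h t = exp h * of_real (exp (\<beta> * t)) * boundary_sum \<beta> n h 1
            + exp (-h) * of_real (exp (- \<beta> * t)) * boundary_sum \<beta> n h (-1)"
  unfolding boundary_sum_def sum_spin_configs_Suc config_weight_Suc[OF assms]
  by (simp add: sum_distrib_left sum.distrib algebra_simps)

lemma config_weight_one: "config_weight \<beta> (Suc 0) h ((\<lambda>x. undefined)(Suc 0 := y)) = exp (h * of_real y)"
  by (simp add: config_weight_def)

lemma pfun_one: "pfun \<beta> (Suc 0) h = exp h + exp (-h)"
  unfolding pfun_def sum_spin_configs_Suc[of _ 0] by (simp add: spin_configs_def config_weight_one)

lemma boundary_sum_one:
  "boundary_sum \<beta> (Suc 0) h t = exp h * of_real (exp (\<beta> * t)) + exp (-h) * of_real (exp (- \<beta> * t))"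
  unfolding boundary_sum_def sum_spin_configs_Suc[of _ 0] by (simp add: spin_configs_def config_weight_one)

fun transfer_iter :: "real \<Rightarrow> complex \<Rightarrow> nat \<Rightarrow> complex \<times> complex" where
  "transfer_iter \<beta> h 0 = (1, 1)"
| "transfer_iter \<beta> h (Suc k) =
    (exp h * bond_par \<beta> * fst (transfer_iter \<beta> h k) + exp (-h) * bond_anti \<beta> * snd (transfer_iter \<beta> h k),
     exp h * bond_anti \<beta> * fst (transfer_iter \<beta> h k) + exp (-h) * bond_par \<beta> * snd (transfer_iter \<beta> h k))"

lemma boundary_sum_transfer_iter:
  "k \<ge> 1 \<Longrightarrow> boundary_sum \<beta> k h 1 = fst (transfer_iter \<beta> h k) \<and>
              boundary_sum \<beta> k h (-1) = snd (transfer_iter \<beta> h k)"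
proof (induction k)
  case 0 then show ?case by simp
next
  case (Suc k)
  show ?case
  proof (cases "k = 0")
    case True then show ?thesis by (simp add: boundary_sum_one)
  next
    case False
    then have "k \<ge> 1" by simp
    with Suc.IH have "boundary_sum \<beta> k h 1 = fst (transfer_iter \<beta> h k)"
      "boundary_sum \<beta> k h (-1) = snd (transfer_iter \<beta> h k)" by auto
    then show ?thesis using \<open>k \<ge> 1\<close> by (simp add: boundary_sum_Suc)
  qed
qed

lemma pfun_transfer_iter:
  "pfun \<beta> (Suc k) h = exp h * fst (transfer_iter \<beta> h k) + exp (-h) * snd (transfer_iter \<beta> h k)"
proof (cases "k = 0")
  case True then show ?thesis by (simp add: pfun_one)
next
  case False
  then have k: "k \<ge> 1" by simp
  show ?thesis using boundary_sum_transfer_iter[OF k] by (simp add: pfun_Suc[OF k])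
qed

lemma cayley_hamilton_2:
  fixes m11 m12 m21 m22 a0 b0 a1 b1 a2 b2 :: complex
  assumes "a1 = m11*a0 + m12*b0" "b1 = m21*a0 + m22*b0" "a2 = m11*a1 + m12*b1" "b2 = m21*a1 + m22*b1"
  shows "a2 = (m11 + m22) * a1 - (m11*m22 - m12*m21) * a0"
    and "b2 = (m11 + m22) * b1 - (m11*m22 - m12*m21) * b0"
  using assms by (simp_all add: algebra_simps)

text \<open>Hence the partition function satisfies a recurrence with the trace and determinant of the
  transfer matrix as coefficients.\<close>
lemma pfun_recurrence:
  "pfun \<beta> (Suc (Suc (Suc k))) h =
     (bond_par \<beta> * (exp h + exp (-h))) * pfun \<beta> (Suc (Suc k)) h
     - (bond_par \<beta> ^ 2 - bond_anti \<beta> ^ 2) * pfun \<beta> (Suc k) h"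
proof -
  define m11 :: complex where "m11 = exp h * bond_par \<beta>"
  define m12 :: complex where "m12 = exp (-h) * bond_anti \<beta>"
  define m21 :: complex where "m21 = exp h * bond_anti \<beta>"
  define m22 :: complex where "m22 = exp (-h) * bond_par \<beta>"
  have det: "m11*m22 - m12*m21 = bond_par \<beta> ^ 2 - bond_anti \<beta> ^ 2"
  proof -
    have "exp h * exp (-h) = (1::complex)" by (simp add: exp_minus field_simps)
    moreover have "m11*m22 - m12*m21 = (exp h * exp (-h)) * (bond_par \<beta> ^ 2 - bond_anti \<beta> ^ 2)"
      unfolding m11_def m12_def m21_def m22_def by (simp add: algebra_simps power2_eq_square)
    ultimately show ?thesis by simp
  qed
  have tr: "m11 + m22 = bond_par \<beta> * (exp h + exp (-h))" by (simp add: m11_def m22_def algebra_simps)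
  have step: "fst (transfer_iter \<beta> h (Suc j)) = m11 * fst (transfer_iter \<beta> h j) + m12 * snd (transfer_iter \<beta> h j)"
             "snd (transfer_iter \<beta> h (Suc j)) = m21 * fst (transfer_iter \<beta> h j) + m22 * snd (transfer_iter \<beta> h j)" for j
    by (simp_all add: m11_def m12_def m21_def m22_def)
  note ch = cayley_hamilton_2[OF step(1)[of k] step(2)[of k] step(1)[of "Suc k"] step(2)[of "Suc k"]]
  show ?thesis unfolding pfun_transfer_iter ch det tr by (simp add: algebra_simps)
qed

lemma linear_recurrence_solution:
  fixes v :: "nat \<Rightarrow> complex"
  assumes rec: "\<And>k. v (Suc (Suc k)) = T * v (Suc k) - D * v k"
    and l1: "l1 ^ 2 = T * l1 - D" and l2: "l2 ^ 2 = T * l2 - D"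
    and v0: "v 0 = A + B" and v1: "v 1 = A * l1 + B * l2"
  shows "v k = A * l1 ^ k + B * l2 ^ k"
proof -
  have "v k = A * l1 ^ k + B * l2 ^ k \<and> v (Suc k) = A * l1 ^ Suc k + B * l2 ^ Suc k" for k
  proof (induction k)
    case 0 then show ?case using v0 v1 by simp
  next
    case (Suc k)
    then have "v (Suc (Suc k)) = T * (A * l1 ^ Suc k + B * l2 ^ Suc k) - D * (A * l1 ^ k + B * l2 ^ k)"
      using rec by simp
    also have "\<dots> = A * l1 ^ k * (T * l1 - D) + B * l2 ^ k * (T * l2 - D)"
      by (simp add: algebra_simps)
    also have "\<dots> = A * l1 ^ Suc (Suc k) + B * l2 ^ Suc (Suc k)"
      unfolding l1[symmetric] l2[symmetric] by (simp add: power2_eq_square)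
    finally show ?case using Suc by simp
  qed
  then show ?thesis by simp
qed

text \<open>Eigenvalues e^\<beta> cosh h \<plusminus> sqrt (e^(2\<beta>) sinh^2 h + e^(-2\<beta>)) of the transfer matrix and
  the amplitudes fitted to the first two partition functions.\<close>
definition eig_plus :: "real \<Rightarrow> complex \<Rightarrow> complex" where
  "eig_plus \<beta> h = bond_par \<beta> * cosh h + bond_anti \<beta> * disc (bond_ratio \<beta>) h"

definition eig_minus :: "real \<Rightarrow> complex \<Rightarrow> complex" where
  "eig_minus \<beta> h = bond_par \<beta> * cosh h - bond_anti \<beta> * disc (bond_ratio \<beta>) h"

definition amp_plus :: "real \<Rightarrow> complex \<Rightarrow> complex" where
  "amp_plus \<beta> h = (pfun \<beta> 2 h - eig_minus \<beta> h * pfun \<beta> 1 h) / (eig_plus \<beta> h - eig_minus \<beta> h)"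

definition amp_minus :: "real \<Rightarrow> complex \<Rightarrow> complex" where
  "amp_minus \<beta> h = (eig_plus \<beta> h * pfun \<beta> 1 h - pfun \<beta> 2 h) / (eig_plus \<beta> h - eig_minus \<beta> h)"

lemma bond_anti_ratio: "bond_anti \<beta> * bond_ratio \<beta> = bond_par \<beta>"
  by (simp flip: of_real_mult exp_add)

lemma eig_characteristic:
  assumes "l = eig_plus \<beta> h \<or> l = eig_minus \<beta> h"
  shows "l ^ 2 = (bond_par \<beta> * (exp h + exp (-h))) * l - (bond_par \<beta> ^ 2 - bond_anti \<beta> ^ 2)"
proof -
  define P where "P = bond_par \<beta>"
  define Q where "Q = bond_anti \<beta>"
  define r where "r = bond_ratio \<beta>"
  define s where "s = disc r h"
  have Qr: "Q * r = P" unfolding P_def Q_def r_def by (rule bond_anti_ratio)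
  have s2: "s ^ 2 = 1 + r ^ 2 * (cosh h ^ 2 - 1)"
    by (simp add: s_def disc_def disc_arg_def)
  have key: "Q ^ 2 * s ^ 2 = Q ^ 2 + P ^ 2 * (cosh h ^ 2 - 1)"
    unfolding s2 Qr[symmetric] by (simp add: algebra_simps power2_eq_square)
  have tr: "exp h + exp (-h) = 2 * cosh h" by (simp add: cosh_field_def)
  have "l = P * cosh h + Q * s \<or> l = P * cosh h - Q * s"
    using assms by (simp add: eig_plus_def eig_minus_def P_def Q_def r_def s_def)
  then show ?thesis
    unfolding P_def[symmetric] Q_def[symmetric] tr
  proof
    assume l: "l = P * cosh h + Q * s"
    show "l ^ 2 = P * (2 * cosh h) * l - (P ^ 2 - Q ^ 2)"
      unfolding l using key by (simp add: algebra_simps power2_eq_square)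
  next
    assume l: "l = P * cosh h - Q * s"
    show "l ^ 2 = P * (2 * cosh h) * l - (P ^ 2 - Q ^ 2)"
      unfolding l using key by (simp add: algebra_simps power2_eq_square)
  qed
qed

theorem pfun_closed_form:
  assumes "eig_plus \<beta> h \<noteq> eig_minus \<beta> h"
  shows "pfun \<beta> (Suc k) h = amp_plus \<beta> h * eig_plus \<beta> h ^ k + amp_minus \<beta> h * eig_minus \<beta> h ^ k"
proof (rule linear_recurrence_solution[where v = "\<lambda>k. pfun \<beta> (Suc k) h"])
  show "pfun \<beta> (Suc (Suc (Suc k))) h =
      (bond_par \<beta> * (exp h + exp (-h))) * pfun \<beta> (Suc (Suc k)) h - (bond_par \<beta> ^ 2 - bond_anti \<beta> ^ 2) * pfun \<beta> (Suc k) h"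
    for k by (rule pfun_recurrence)
  show "eig_plus \<beta> h ^ 2 = (bond_par \<beta> * (exp h + exp (-h))) * eig_plus \<beta> h - (bond_par \<beta> ^ 2 - bond_anti \<beta> ^ 2)"
       "eig_minus \<beta> h ^ 2 = (bond_par \<beta> * (exp h + exp (-h))) * eig_minus \<beta> h - (bond_par \<beta> ^ 2 - bond_anti \<beta> ^ 2)"
    by (simp_all add: eig_characteristic)
  have d: "eig_plus \<beta> h - eig_minus \<beta> h \<noteq> 0" using assms by simp
  have "amp_plus \<beta> h + amp_minus \<beta> h
      = ((eig_plus \<beta> h - eig_minus \<beta> h) * pfun \<beta> 1 h) / (eig_plus \<beta> h - eig_minus \<beta> h)"
    unfolding amp_plus_def amp_minus_def add_divide_distrib[symmetric] by (simp add: algebra_simps)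
  then show "pfun \<beta> (Suc 0) h = amp_plus \<beta> h + amp_minus \<beta> h"
    using d by simp
  have "amp_plus \<beta> h * eig_plus \<beta> h + amp_minus \<beta> h * eig_minus \<beta> h
      = ((eig_plus \<beta> h - eig_minus \<beta> h) * pfun \<beta> 2 h) / (eig_plus \<beta> h - eig_minus \<beta> h)"
    unfolding amp_plus_def amp_minus_def times_divide_eq_left add_divide_distrib[symmetric]
    by (simp add: algebra_simps)
  then show "pfun \<beta> (Suc 1) h = amp_plus \<beta> h * eig_plus \<beta> h + amp_minus \<beta> h * eig_minus \<beta> h"
    using d by (simp add: numeral_2_eq_2)
qed

lemma pfun_1: "pfun \<beta> 1 h = 2 * cosh h" "pfun \<beta> (Suc 0) h = 2 * cosh h"
  using pfun_transfer_iter[of \<beta> 0 h] by (simp_all add: cosh_field_def)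

lemma pfun_2: "pfun \<beta> 2 h = 2 * bond_par \<beta> * cosh (2 * h) + 2 * bond_anti \<beta>"
proof -
  have e: "exp h * exp h = exp (2 * h)" "exp (-h) * exp (-h) = exp (-(2 * h))" "exp h * exp (-h) = 1"
    by (simp_all flip: exp_add)
  have "pfun \<beta> 2 h = pfun \<beta> (Suc 1) h" by (simp add: numeral_2_eq_2)
  also have "\<dots> = exp h * (exp h * bond_par \<beta> + exp (-h) * bond_anti \<beta>)
      + exp (-h) * (exp h * bond_anti \<beta> + exp (-h) * bond_par \<beta>)"
    unfolding pfun_transfer_iter by simp
  also have "\<dots> = bond_par \<beta> * (exp h * exp h + exp (-h) * exp (-h)) + 2 * (exp h * exp (-h)) * bond_anti \<beta>"
    by (simp add: algebra_simps)
  also have "\<dots> = 2 * bond_par \<beta> * cosh (2 * h) + 2 * bond_anti \<beta>"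
    unfolding e by (simp add: cosh_field_def)
  finally show ?thesis .
qed

lemma disc_0: "disc r 0 = 1" by (simp add: disc_def disc_arg_def)

lemma eig_plus_0: "eig_plus \<beta> 0 = bond_par \<beta> + bond_anti \<beta>"
  by (simp add: eig_plus_def disc_0)

lemma eig_minus_0: "eig_minus \<beta> 0 = bond_par \<beta> - bond_anti \<beta>"
  by (simp add: eig_minus_def disc_0)

lemma eig_plus_minus: "eig_plus \<beta> h - eig_minus \<beta> h = 2 * bond_anti \<beta> * disc (bond_ratio \<beta>) h"
  by (simp add: eig_plus_def eig_minus_def)

lemma bond_ratio_plus_1: "bond_ratio \<beta> + 1 \<noteq> 0"
proof
  assume "bond_ratio \<beta> + 1 = 0"
  then have "Re (bond_ratio \<beta> + 1) = 0" by simp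
  then show False using exp_gt_zero[of "2 * \<beta>"] by simp
qed

lemma eig_plus_eig_ratio: "eig_plus \<beta> h = (bond_par \<beta> + bond_anti \<beta>) * eig_ratio (bond_ratio \<beta>) h"
proof -
  have "bond_par \<beta> + bond_anti \<beta> = bond_anti \<beta> * (bond_ratio \<beta> + 1)"
    using bond_anti_ratio[of \<beta>] by (simp add: algebra_simps)
  then show ?thesis
    unfolding eig_plus_def eig_ratio_def using bond_ratio_plus_1[of \<beta>] bond_anti_ratio[of \<beta>, symmetric]
    by (simp add: field_simps)
qed

lemma bigo0_eig_plus: "bigo0 (\<lambda>h. eig_plus \<beta> h - (bond_par \<beta> + bond_anti \<beta>)) 2"
proof -
  have "bigo0 (\<lambda>h. bond_par \<beta> * (cosh h - 1) + bond_anti \<beta> * (disc (bond_ratio \<beta>) h - 1)) 2"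
    by (rule bigo0_add[OF bigo0_mult[OF bigo0_const bigo0_cosh_1] bigo0_mult[OF bigo0_const bigo0_disc_1]]) auto
  then show ?thesis by (rule bigo0_cong) (simp add: eig_plus_def algebra_simps)
qed

lemma bigo0_eig_minus: "bigo0 (\<lambda>h. eig_minus \<beta> h - (bond_par \<beta> - bond_anti \<beta>)) 2"
proof -
  have "bigo0 (\<lambda>h. bond_par \<beta> * (cosh h - 1) - bond_anti \<beta> * (disc (bond_ratio \<beta>) h - 1)) 2"
    by (rule bigo0_diff[OF bigo0_mult[OF bigo0_const bigo0_cosh_1] bigo0_mult[OF bigo0_const bigo0_disc_1]]) auto
  then show ?thesis by (rule bigo0_cong) (simp add: eig_minus_def algebra_simps)
qed

lemma bigo0_pfun_1: "bigo0 (\<lambda>h. pfun \<beta> 1 h - 2) 2"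
  using bigo0_mult[OF bigo0_const[of 2] bigo0_cosh_1] by (rule bigo0_cong) (auto simp: pfun_1 algebra_simps)

lemma bigo0_pfun_1_bounded: "bigo0 (\<lambda>h. pfun \<beta> 1 h) 0"
  using bigo0_add[OF bigo0_mono[OF bigo0_pfun_1, of 0] bigo0_const[of 2]] by simp

lemma bigo0_pfun_2: "bigo0 (\<lambda>h. pfun \<beta> 2 h - (2 * bond_par \<beta> + 2 * bond_anti \<beta>)) 2"
  using bigo0_mult[OF bigo0_const[of "2 * bond_par \<beta>"] bigo0_rescale[OF bigo0_cosh_1, of 2]]
  by (rule bigo0_cong) (auto simp: pfun_2 algebra_simps)

lemma eig_gap_bounded_below:
  obtains e where "e > 0" "\<And>h. norm h \<le> e \<Longrightarrow> norm (eig_plus \<beta> h - eig_minus \<beta> h) \<ge> exp (-\<beta>)"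
proof -
  obtain e where e: "e > 0" "\<And>h. norm h \<le> e \<Longrightarrow> norm (disc (bond_ratio \<beta>) h) \<ge> 1/2"
    using bigo0_bounded_below[of "disc (bond_ratio \<beta>)" 1] bigo0_mono[OF bigo0_disc_1, of 1] by auto
  show ?thesis
  proof (rule that[OF e(1)])
    fix h :: complex assume "norm h \<le> e"
    then have "norm (disc (bond_ratio \<beta>) h) \<ge> 1/2" by (rule e(2))
    then show "norm (eig_plus \<beta> h - eig_minus \<beta> h) \<ge> exp (-\<beta>)"
      unfolding eig_plus_minus by (simp add: norm_mult)
  qed
qed

lemma bigo0_amp_plus: "bigo0 (\<lambda>h. amp_plus \<beta> h - 2) 2"
proof -
  obtain e where e: "e > 0" "\<And>h. norm h \<le> e \<Longrightarrow> norm (eig_plus \<beta> h - eig_minus \<beta> h) \<ge> exp (-\<beta>)"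
    using eig_gap_bounded_below[of \<beta>] by blast
  define a where "a = bond_par \<beta> + bond_anti \<beta>"
  define b where "b = bond_par \<beta> - bond_anti \<beta>"
  define num where "num h = (pfun \<beta> 2 h - (2 * bond_par \<beta> + 2 * bond_anti \<beta>))
      - ((eig_minus \<beta> h - b) * pfun \<beta> 1 h + b * (pfun \<beta> 1 h - 2))
      - 2 * ((eig_plus \<beta> h - a) - (eig_minus \<beta> h - b))" for h
  have "bigo0 num 2"
    unfolding num_def
  proof (rule bigo0_diff[OF bigo0_diff])
    show "bigo0 (\<lambda>h. pfun \<beta> 2 h - (2 * bond_par \<beta> + 2 * bond_anti \<beta>)) 2" by (rule bigo0_pfun_2)
    show "bigo0 (\<lambda>h. (eig_minus \<beta> h - b) * pfun \<beta> 1 h + b * (pfun \<beta> 1 h - 2)) 2"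
      by (rule bigo0_add[OF bigo0_mult[OF bigo0_eig_minus[of \<beta>, folded b_def] bigo0_pfun_1_bounded]
            bigo0_mult[OF bigo0_const bigo0_pfun_1]]) auto
    show "bigo0 (\<lambda>h. 2 * (eig_plus \<beta> h - a - (eig_minus \<beta> h - b))) 2"
      by (rule bigo0_mult[OF bigo0_const bigo0_diff[OF bigo0_eig_plus[of \<beta>, folded a_def]
            bigo0_eig_minus[of \<beta>, folded b_def]]]) auto
  qed
  then have "bigo0 (\<lambda>h. num h / (eig_plus \<beta> h - eig_minus \<beta> h)) 2"
    by (rule bigo0_divide[OF _ _ e(1) e(2)]) simp
  then show ?thesis
  proof (rule bigo0_cong_near[OF _ e(1)])
    fix h :: complex assume "norm h \<le> e"
    then have "eig_plus \<beta> h - eig_minus \<beta> h \<noteq> 0" using e(2)[of h] by auto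
    moreover have "num h = pfun \<beta> 2 h - eig_minus \<beta> h * pfun \<beta> 1 h - 2 * (eig_plus \<beta> h - eig_minus \<beta> h)"
      by (simp add: num_def a_def b_def algebra_simps)
    ultimately show "num h / (eig_plus \<beta> h - eig_minus \<beta> h) = amp_plus \<beta> h - 2"
      by (simp add: amp_plus_def field_simps)
  qed
qed

lemma bigo0_amp_minus: "bigo0 (amp_minus \<beta>) 2"
proof -
  obtain e where e: "e > 0" "\<And>h. norm h \<le> e \<Longrightarrow> norm (eig_plus \<beta> h - eig_minus \<beta> h) \<ge> exp (-\<beta>)"
    using eig_gap_bounded_below[of \<beta>] by blast
  define a where "a = bond_par \<beta> + bond_anti \<beta>"
  define num where "num h = (eig_plus \<beta> h - a) * pfun \<beta> 1 h + a * (pfun \<beta> 1 h - 2)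
      - (pfun \<beta> 2 h - (2 * bond_par \<beta> + 2 * bond_anti \<beta>))" for h
  have "bigo0 num 2"
    unfolding num_def
    by (rule bigo0_diff[OF bigo0_add[OF bigo0_mult[OF bigo0_eig_plus[of \<beta>, folded a_def] bigo0_pfun_1_bounded]
          bigo0_mult[OF bigo0_const bigo0_pfun_1]] bigo0_pfun_2]) auto
  then have "bigo0 (\<lambda>h. num h / (eig_plus \<beta> h - eig_minus \<beta> h)) 2"
    by (rule bigo0_divide[OF _ _ e(1) e(2)]) simp
  then show ?thesis
  proof (rule bigo0_cong)
    fix h
    have "num h = eig_plus \<beta> h * pfun \<beta> 1 h - pfun \<beta> 2 h" by (simp add: num_def a_def algebra_simps)
    then show "num h / (eig_plus \<beta> h - eig_minus \<beta> h) = amp_minus \<beta> h"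
      unfolding amp_minus_def by simp
  qed
qed

lemma pfun_zero_field: "pfun \<beta> (Suc k) 0 = 2 * (bond_par \<beta> + bond_anti \<beta>) ^ k"
proof -
  have gap: "eig_plus \<beta> 0 - eig_minus \<beta> 0 \<noteq> 0" unfolding eig_plus_minus by (simp add: disc_0)
  have A: "amp_plus \<beta> 0 = 2"
  proof -
    have "pfun \<beta> 2 0 - eig_minus \<beta> 0 * pfun \<beta> 1 0 = 2 * (eig_plus \<beta> 0 - eig_minus \<beta> 0)"
      by (simp add: pfun_1 pfun_2 eig_plus_0 eig_minus_0 algebra_simps)
    then show ?thesis by (simp only: amp_plus_def nonzero_mult_div_cancel_right[OF gap])
  qed
  have B: "amp_minus \<beta> 0 = 0"
  proof -
    have "eig_plus \<beta> 0 * pfun \<beta> 1 0 - pfun \<beta> 2 0 = 0"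
      by (simp add: pfun_1 pfun_2 eig_plus_0 algebra_simps)
    then show ?thesis unfolding amp_minus_def by simp
  qed
  show ?thesis using pfun_closed_form[of \<beta> 0 k] gap by (simp add: A B eig_plus_0)
qed

lemma eig_dominance:
  assumes "\<beta> \<ge> 0"
  obtains \<epsilon> \<theta> where "\<epsilon> > 0" "0 \<le> \<theta>" "\<theta> < 1"
    "\<And>h. norm h \<le> \<epsilon> \<Longrightarrow> eig_plus \<beta> h \<noteq> 0 \<and> norm (eig_minus \<beta> h) \<le> \<theta> * norm (eig_plus \<beta> h)"
proof -
  define P where "P = exp \<beta>"
  define Q where "Q = exp (-\<beta>)"
  have PQ: "Q \<le> P" "0 < Q" using assms by (simp_all add: P_def Q_def)
  obtain e1 where e1: "e1 > 0" "\<And>h. norm h \<le> e1 \<Longrightarrow> norm (eig_plus \<beta> h - (bond_par \<beta> + bond_anti \<beta>)) \<le> Q/2"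
    using bigo0_small[OF bigo0_eig_plus[of \<beta>], of "Q/2"] PQ by auto
  obtain e2 where e2: "e2 > 0" "\<And>h. norm h \<le> e2 \<Longrightarrow> norm (eig_minus \<beta> h - (bond_par \<beta> - bond_anti \<beta>)) \<le> Q/2"
    using bigo0_small[OF bigo0_eig_minus[of \<beta>], of "Q/2"] PQ by auto
  have nsum: "norm (bond_par \<beta> + bond_anti \<beta>) = P + Q"
    unfolding P_def Q_def by (metis norm_of_real of_real_add abs_of_pos add_pos_pos exp_gt_zero)
  have ndiff: "norm (bond_par \<beta> - bond_anti \<beta>) = P - Q"
    using PQ(1) unfolding P_def Q_def by (metis norm_of_real of_real_diff abs_of_nonneg diff_ge_0_iff_ge)
  define \<theta> where "\<theta> = (P - Q/2) / (P + Q/2)"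
  have \<theta>: "0 \<le> \<theta>" "\<theta> < 1" using PQ by (auto simp: \<theta>_def field_simps)
  show ?thesis
  proof (rule that[of "min e1 e2", OF _ \<theta>])
    fix h :: complex assume h: "norm h \<le> min e1 e2"
    have plus: "norm (eig_plus \<beta> h) \<ge> P + Q/2"
      using e1(2)[of h] h norm_triangle_ineq2[of "bond_par \<beta> + bond_anti \<beta>" "bond_par \<beta> + bond_anti \<beta> - eig_plus \<beta> h"] nsum
      by (simp add: norm_minus_commute)
    have "norm (eig_minus \<beta> h) \<le> P - Q/2"
      using e2(2)[of h] h norm_triangle_ineq[of "bond_par \<beta> - bond_anti \<beta>" "eig_minus \<beta> h - (bond_par \<beta> - bond_anti \<beta>)"] ndiff
      by simp
    also have "\<dots> = \<theta> * (P + Q/2)" using PQ by (simp add: \<theta>_def)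
    also have "\<dots> \<le> \<theta> * norm (eig_plus \<beta> h)" using plus \<theta> by (intro mult_left_mono) auto
    finally show "eig_plus \<beta> h \<noteq> 0 \<and> norm (eig_minus \<beta> h) \<le> \<theta> * norm (eig_plus \<beta> h)"
      using plus PQ by auto
  qed (use e1 e2 in auto)
qed

lemma amp_ratio_bound:
  obtains \<epsilon> where "\<epsilon> > 0"
    "\<And>h. norm h \<le> \<epsilon> \<Longrightarrow> amp_plus \<beta> h \<noteq> 0 \<and> norm (amp_minus \<beta> h / amp_plus \<beta> h) \<le> 1"
proof -
  obtain e1 where e1: "e1 > 0" "\<And>h. norm h \<le> e1 \<Longrightarrow> norm (amp_plus \<beta> h - 2) \<le> 1"
    using bigo0_small[OF bigo0_amp_plus[of \<beta>], of 1] by auto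
  obtain e2 where e2: "e2 > 0" "\<And>h. norm h \<le> e2 \<Longrightarrow> norm (amp_minus \<beta> h) \<le> 1"
    using bigo0_small[OF bigo0_amp_minus[of \<beta>], of 1] by auto
  show ?thesis
  proof (rule that[of "min e1 e2"])
    fix h :: complex assume h: "norm h \<le> min e1 e2"
    have "norm (amp_plus \<beta> h) \<ge> 1"
      using e1(2)[of h] h norm_triangle_ineq2[of 2 "2 - amp_plus \<beta> h"] by (simp add: norm_minus_commute)
    then show "amp_plus \<beta> h \<noteq> 0 \<and> norm (amp_minus \<beta> h / amp_plus \<beta> h) \<le> 1"
      using e2(2)[of h] h by (auto simp: norm_divide divide_le_eq)
  qed (use e1 e2 in auto)
qed

(* The fluctuation scale n^(-1/4) and the factorisation of the normalised moment generating
   function into four factors, each of which is controlled separately. *)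

definition quarter_scale :: "nat \<Rightarrow> complex" where
  "quarter_scale n = of_real (real n powr (- 1/4))"

lemma quarter_scale_powers:
  assumes "n \<ge> 1"
  shows "quarter_scale n ^ 2 = 1 / of_real (sqrt (real n))" "quarter_scale n ^ 4 = 1 / of_nat n"
proof -
  have "(real n powr (- 1/4)) ^ 2 = real n powr (- 1/2)"
    using powr_add[of "real n" "- 1/4" "- 1/4"] by (simp add: power2_eq_square)
  also have "\<dots> = 1 / sqrt (real n)" by (simp add: powr_minus_divide powr_half_sqrt)
  finally have sq: "(real n powr (- 1/4)) ^ 2 = 1 / sqrt (real n)" .
  show sq2: "quarter_scale n ^ 2 = 1 / of_real (sqrt (real n))"
    unfolding quarter_scale_def of_real_power[symmetric] sq by simp
  have "quarter_scale n ^ 4 = (1 / of_real (sqrt (real n))) ^ 2"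
    unfolding sq2[symmetric] by simp
  also have "\<dots> = 1 / of_nat n"
    by (simp add: power_divide flip: of_real_power)
  finally show "quarter_scale n ^ 4 = 1 / of_nat n" .
qed

lemma quarter_scale_div: "z / of_real (real n powr (1/4)) = quarter_scale n * z"
  by (simp add: quarter_scale_def powr_minus_divide)

lemma quarter_scale_limits:
  shows "quarter_scale \<longlonglongrightarrow> 0" and "(\<lambda>n. real n * norm (quarter_scale n) ^ 6) \<longlonglongrightarrow> 0"
proof -
  have "(\<lambda>n. real n powr (- 1/4)) \<longlonglongrightarrow> 0" by real_asymp
  then show "quarter_scale \<longlonglongrightarrow> 0"
    unfolding quarter_scale_def using tendsto_of_real by fastforce
  have "(\<lambda>n. real n * \<bar>real n powr (- 1/4)\<bar> ^ 6) \<longlonglongrightarrow> 0" by real_asymp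
  then show "(\<lambda>n. real n * norm (quarter_scale n) ^ 6) \<longlonglongrightarrow> 0"
    by (simp add: quarter_scale_def)
qed

lemma two_term_power_factorization:
  fixes a b L M S e g G :: complex
  assumes "a \<noteq> 0" "S \<noteq> 0" "e \<noteq> 0" "g \<noteq> 0" "L = S * (e * g)"
  shows "(a * L ^ k + b * M ^ k) / (2 * S ^ k) * G = a/2 * g ^ k * (e ^ k * G) * (1 + b/a * (M/L) ^ k)"
proof -
  have "L ^ k = S ^ k * e ^ k * g ^ k" unfolding assms(5) by (simp add: power_mult_distrib)
  moreover have "L \<noteq> 0" using assms by simp
  ultimately show ?thesis using assms(1-4)
    by (simp add: field_simps power_divide)
qed

definition mgf_factorised :: "real \<Rightarrow> nat \<Rightarrow> complex \<Rightarrow> complex \<Rightarrow> complex" where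
  "mgf_factorised \<beta> n h z =
     amp_plus \<beta> h / 2
     * (eig_ratio (bond_ratio \<beta>) h / exp (cumulant (bond_ratio \<beta>) h)) ^ (n - 1)
     * exp (of_nat (n - 1) * cumulant (bond_ratio \<beta>) h - of_real (sqrt (real n)) * bond_ratio \<beta> * z ^ 2 / 2)
     * (1 + amp_minus \<beta> h / amp_plus \<beta> h * (eig_minus \<beta> h / eig_plus \<beta> h) ^ (n - 1))"

theorem mgf_factorization:
  fixes \<beta> :: real and z :: complex and n :: nat
  defines "h \<equiv> quarter_scale n * z"
  assumes "n \<ge> 1" "eig_plus \<beta> h \<noteq> eig_minus \<beta> h" "eig_plus \<beta> h \<noteq> 0" "amp_plus \<beta> h \<noteq> 0"
  shows "ising_expect 0 \<beta> n (\<lambda>\<sigma>. exp (z * of_real (magnetization n \<sigma> / real n powr (1/4))))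
           * exp (- of_real (sqrt (real n) * exp (2 * \<beta>)) * z ^ 2 / 2)
       = mgf_factorised \<beta> n h z"
proof -
  obtain k where k: "n = Suc k" using assms(2) by (cases n) auto
  define r where "r = bond_ratio \<beta>"
  define S where "S = bond_par \<beta> + bond_anti \<beta>"
  define G where "G = exp (- of_real (sqrt (real n) * exp (2 * \<beta>)) * z ^ 2 / 2)"
  have S: "S \<noteq> 0" unfolding S_def
    by (metis add_pos_pos exp_gt_zero of_real_add of_real_eq_0_iff order_less_irrefl)
  have ratio: "eig_ratio r h \<noteq> 0" using assms(4) by (simp add: eig_plus_eig_ratio r_def)
  have "ising_expect 0 \<beta> n (\<lambda>\<sigma>. exp (z * of_real (magnetization n \<sigma> / real n powr (1/4))))
      = (amp_plus \<beta> h * eig_plus \<beta> h ^ k + amp_minus \<beta> h * eig_minus \<beta> h ^ k) / (2 * S ^ k)"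
    unfolding ising_expect_eq_pfun quarter_scale_div k pfun_zero_field S_def
    using pfun_closed_form[OF assms(3)] by (simp add: h_def k)
  also have "\<dots> * G = amp_plus \<beta> h / 2 * (eig_ratio r h / exp (cumulant r h)) ^ k
      * (exp (cumulant r h) ^ k * G) * (1 + amp_minus \<beta> h / amp_plus \<beta> h * (eig_minus \<beta> h / eig_plus \<beta> h) ^ k)"
    using ratio by (intro two_term_power_factorization assms(5) S)
      (simp_all add: eig_plus_eig_ratio S_def r_def)
  also have "exp (cumulant r h) ^ k * G = exp (of_nat k * cumulant r h - of_real (sqrt (real n)) * r * z ^ 2 / 2)"
  proof -
    have "G = exp (- (of_real (sqrt (real n)) * r * z ^ 2 / 2))" by (simp add: G_def r_def)
    then show ?thesis by (simp only: exp_of_nat_mult[symmetric] diff_conv_add_uminus exp_add)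
  qed
  finally show ?thesis unfolding mgf_factorised_def r_def[symmetric] by (simp add: G_def k)
qed

lemma uniform_limit_by_bound:
  fixes f :: "nat \<Rightarrow> 'a \<Rightarrow> 'b::real_normed_vector"
  assumes "eventually (\<lambda>n. \<forall>z\<in>K. norm (f n z - l z) \<le> b n) sequentially" "b \<longlonglongrightarrow> 0"
  shows "uniform_limit K f l sequentially"
proof (rule uniform_limitI)
  fix e :: real assume "e > 0"
  then have "eventually (\<lambda>n. b n < e) sequentially" using order_tendstoD(2)[OF assms(2)] by blast
  with assms(1) show "eventually (\<lambda>n. \<forall>z\<in>K. dist (f n z) (l z) < e) sequentially"
    by eventually_elim (auto simp: dist_norm intro: le_less_trans)
qed

lemma rescaled_points_small:
  fixes c :: "nat \<Rightarrow> complex"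
  assumes "bounded K" "c \<longlonglongrightarrow> 0" "\<epsilon> > 0"
  shows "eventually (\<lambda>n. \<forall>z\<in>K. norm (c n * z) \<le> \<epsilon>) sequentially"
proof -
  obtain R where R: "R > 0" "\<And>z. z \<in> K \<Longrightarrow> norm z \<le> R"
    using assms(1) unfolding bounded_pos by blast
  have "eventually (\<lambda>n. norm (c n) < \<epsilon> / R) sequentially"
    using order_tendstoD(2)[OF tendsto_norm_zero[OF assms(2)]] R(1) assms(3) by simp
  then show ?thesis
  proof eventually_elim
    case (elim n)
    show ?case
    proof
      fix z assume "z \<in> K"
      then have "norm (c n) * norm z \<le> \<epsilon> / R * R"
        using elim R assms(3) by (intro mult_mono) auto
      then show "norm (c n * z) \<le> \<epsilon>" using R(1) by (simp add: norm_mult)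
    qed
  qed
qed

lemma uniform_limit_rescaled:
  fixes c :: "nat \<Rightarrow> complex"
  assumes "bigo0 (\<lambda>h. f h - a) 1" "bounded K" "c \<longlonglongrightarrow> 0"
  shows "uniform_limit K (\<lambda>n z. f (c n * z)) (\<lambda>_. a) sequentially"
proof -
  obtain C e where C: "C \<ge> 0" "e > 0" "\<And>h. norm h \<le> e \<Longrightarrow> norm (f h - a) \<le> C * norm h ^ 1"
    using assms(1) unfolding bigo0_def by blast
  obtain R where R: "R > 0" "\<And>z. z \<in> K \<Longrightarrow> norm z \<le> R"
    using assms(2) unfolding bounded_pos by blast
  show ?thesis
  proof (rule uniform_limit_by_bound)
    show "eventually (\<lambda>n. \<forall>z\<in>K. norm (f (c n * z) - a) \<le> C * R * norm (c n)) sequentially"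
      using rescaled_points_small[OF assms(2,3) C(2)]
    proof eventually_elim
      case (elim n)
      show ?case
      proof
        fix z assume z: "z \<in> K"
        have "norm (f (c n * z) - a) \<le> C * (norm (c n) * norm z)"
          using C(3)[of "c n * z"] elim z by (simp add: norm_mult)
        also have "\<dots> \<le> C * (norm (c n) * R)"
          using R(2)[OF z] C(1) by (intro mult_left_mono) auto
        finally show "norm (f (c n * z) - a) \<le> C * R * norm (c n)" by (simp add: mult_ac)
      qed
    qed
    show "(\<lambda>n. C * R * norm (c n)) \<longlonglongrightarrow> 0"
      by (intro tendsto_mult_right_zero tendsto_norm_zero assms(3))
  qed
qed

lemma power_near_one_bound:
  fixes w :: complex
  shows "norm (w ^ k - 1) \<le> exp (real k * norm (w - 1)) - 1"
proof (induction k)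
  case 0 then show ?case by simp
next
  case (Suc k)
  define d where "d = w - 1"
  have "w ^ Suc k - 1 = w * (w ^ k - 1) + d" by (simp add: d_def algebra_simps)
  then have "norm (w ^ Suc k - 1) \<le> norm w * norm (w ^ k - 1) + norm d"
    by (metis norm_mult norm_triangle_ineq)
  also have "\<dots> \<le> (1 + norm d) * (exp (real k * norm d) - 1) + norm d"
    using Suc.IH norm_triangle_ineq[of 1 d] by (intro add_mono mult_mono) (auto simp: d_def)
  also have "\<dots> \<le> exp (norm d) * (exp (real k * norm d) - 1) + (exp (norm d) - 1)"
  proof -
    have "1 + norm d \<le> exp (norm d)" by (rule exp_ge_add_one_self)
    then have "norm d \<le> exp (norm d) - 1" by linarith
    with \<open>1 + norm d \<le> exp (norm d)\<close> show ?thesis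
      by (intro add_mono mult_right_mono) auto
  qed
  also have "\<dots> = exp (real (Suc k) * norm d) - 1"
    by (simp add: algebra_simps exp_add[symmetric])
  finally show ?case by (simp add: d_def)
qed

lemma uniform_limit_rescaled_power:
  fixes c :: "nat \<Rightarrow> complex"
  assumes "bigo0 (\<lambda>h. g h - 1) k" "bounded K" "c \<longlonglongrightarrow> 0" "(\<lambda>n. real n * norm (c n) ^ k) \<longlonglongrightarrow> 0"
  shows "uniform_limit K (\<lambda>n z. g (c n * z) ^ (n - 1)) (\<lambda>_. 1) sequentially"
proof -
  obtain C e where C: "C \<ge> 0" "e > 0" "\<And>h. norm h \<le> e \<Longrightarrow> norm (g h - 1) \<le> C * norm h ^ k"
    using assms(1) unfolding bigo0_def by blast
  obtain R where R: "R > 0" "\<And>z. z \<in> K \<Longrightarrow> norm z \<le> R"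
    using assms(2) unfolding bounded_pos by blast
  define b where "b n = exp (C * R ^ k * (real n * norm (c n) ^ k)) - 1" for n
  show ?thesis
  proof (rule uniform_limit_by_bound)
    show "eventually (\<lambda>n. \<forall>z\<in>K. norm (g (c n * z) ^ (n - 1) - 1) \<le> b n) sequentially"
      using rescaled_points_small[OF assms(2,3) C(2)]
    proof eventually_elim
      case (elim n)
      show ?case
      proof
        fix z assume z: "z \<in> K"
        have "norm (g (c n * z) - 1) \<le> C * (norm (c n) * norm z) ^ k"
          using C(3)[of "c n * z"] elim z by (simp add: norm_mult)
        also have "\<dots> \<le> C * (norm (c n) * R) ^ k"
          using R(2)[OF z] C(1) by (intro mult_left_mono power_mono mult_left_mono) auto
        finally have gz: "norm (g (c n * z) - 1) \<le> C * R ^ k * norm (c n) ^ k"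
          by (simp add: power_mult_distrib mult_ac)
        have "real (n - 1) * norm (g (c n * z) - 1) \<le> real n * (C * R ^ k * norm (c n) ^ k)"
          using gz by (intro mult_mono) auto
        then have "exp (real (n - 1) * norm (g (c n * z) - 1)) - 1 \<le> b n"
          by (simp add: b_def mult_ac)
        then show "norm (g (c n * z) ^ (n - 1) - 1) \<le> b n"
          using power_near_one_bound[of "g (c n * z)" "n - 1"] by linarith
      qed
    qed
    have "b \<longlonglongrightarrow> exp (C * R ^ k * 0) - 1"
      unfolding b_def by (intro tendsto_intros assms(4))
    then show "b \<longlonglongrightarrow> 0" by simp
  qed
qed

lemma uniform_limit_rescaled_geometric:
  fixes c :: "nat \<Rightarrow> complex" and p q :: "complex \<Rightarrow> complex"
  assumes "\<epsilon> > 0" "0 \<le> \<theta>" "\<theta> < 1" "\<And>h. norm h \<le> \<epsilon> \<Longrightarrow> norm (p h) \<le> C \<and> norm (q h) \<le> \<theta>"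
    and "bounded K" "c \<longlonglongrightarrow> 0"
  shows "uniform_limit K (\<lambda>n z. 1 + p (c n * z) * q (c n * z) ^ (n - 1)) (\<lambda>_. 1) sequentially"
proof (rule uniform_limit_by_bound)
  show "eventually (\<lambda>n. \<forall>z\<in>K. norm (1 + p (c n * z) * q (c n * z) ^ (n - 1) - 1) \<le> C * \<theta> ^ (n - 1))
          sequentially"
    using rescaled_points_small[OF assms(5,6,1)]
  proof eventually_elim
    case (elim n)
    show ?case
    proof
      fix z assume "z \<in> K"
      then have "norm (p (c n * z)) \<le> C" "norm (q (c n * z)) \<le> \<theta>" using assms(4) elim by auto
      then have "norm (p (c n * z)) * norm (q (c n * z)) ^ (n - 1) \<le> C * \<theta> ^ (n - 1)"
        by (intro mult_mono power_mono) (auto intro: order_trans[OF norm_ge_zero])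
      then show "norm (1 + p (c n * z) * q (c n * z) ^ (n - 1) - 1) \<le> C * \<theta> ^ (n - 1)"
        by (simp add: norm_mult norm_power)
    qed
  qed
  have "(\<lambda>n. C * \<theta> ^ (Suc n - 1)) \<longlonglongrightarrow> C * 0"
    using assms(2,3) by (simp add: LIMSEQ_power_zero tendsto_mult_right_zero)
  then show "(\<lambda>n. C * \<theta> ^ (n - 1)) \<longlonglongrightarrow> 0"
    using filterlim_sequentially_Suc[of "\<lambda>n. C * \<theta> ^ (n - 1)"] by simp
qed

lemma uniform_limit_exp:
  fixes f :: "'b \<Rightarrow> 'a \<Rightarrow> complex"
  assumes lim: "uniform_limit K f g F" and bnd: "bounded (g ` K)"
  shows "uniform_limit K (\<lambda>n z. exp (f n z)) (\<lambda>z. exp (g z)) F"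
proof -
  obtain R where R: "\<And>z. z \<in> K \<Longrightarrow> norm (g z) \<le> R"
    using bnd unfolding bounded_iff by blast
  have "uniformly_continuous_on (cball 0 (R + 1)) (exp :: complex \<Rightarrow> complex)"
    by (intro compact_uniformly_continuous continuous_intros compact_cball)
  moreover have "eventually (\<lambda>n. \<forall>z\<in>K. f n z \<in> cball 0 (R + 1)) F"
    using uniform_limitD[OF lim zero_less_one]
  proof eventually_elim
    case (elim n)
    show ?case
    proof
      fix z assume z: "z \<in> K"
      have "norm (f n z) \<le> norm (g z) + dist (f n z) (g z)"
        by (metis dist_norm norm_triangle_sub add.commute)
      then show "f n z \<in> cball 0 (R + 1)" using elim z R[OF z] by fastforce
    qed
  qed
  ultimately show ?thesis by (intro uniform_limit_compose_uniformly_continuous_on[OF lim]) auto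
qed

text \<open>The Gaussian term cancels the quadratic part of (n - 1) cumulant r (z n^(-1/4)); what
  remains besides the quartic term is of order n^(-1/2).\<close>
lemma quartic_exponent_error:
  fixes r z :: complex and n :: nat
  defines "S \<equiv> (of_real (sqrt (real n)) :: complex)" and "\<kappa> \<equiv> (r - 3 * r ^ 3) / 24"
  assumes "n \<ge> 1"
  shows "of_nat (n - 1) * cumulant r (quarter_scale n * z) - S * r * z ^ 2 / 2 - \<kappa> * z ^ 4
           = - (r * z ^ 2 / (2 * S)) - \<kappa> * z ^ 4 / S ^ 2"
proof -
  have S: "S \<noteq> 0" "S ^ 2 = of_nat n" using assms(3) by (simp_all add: S_def flip: of_real_power)
  have h2: "(quarter_scale n * z) ^ 2 = z ^ 2 / S" and h4: "(quarter_scale n * z) ^ 4 = z ^ 4 / S ^ 2"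
    using quarter_scale_powers[OF assms(3)] S(2) by (simp_all add: S_def power_mult_distrib)
  have n1: "(of_nat (n - 1) :: complex) = S ^ 2 - 1" using S(2) assms(3) by (simp add: of_nat_diff)
  have "of_nat (n - 1) * cumulant r (quarter_scale n * z) - S * r * z ^ 2 / 2 - \<kappa> * z ^ 4
      = (S ^ 2 - 1) * (r * (z ^ 2 / S) / 2 + \<kappa> * (z ^ 4 / S ^ 2)) - S * r * z ^ 2 / 2 - \<kappa> * z ^ 4"
    unfolding cumulant_def h2 h4 n1 \<kappa>_def ..
  also have "\<dots> = - (r * z ^ 2 / (2 * S)) - \<kappa> * z ^ 4 / S ^ 2"
    using S(1) by (simp add: field_simps power2_eq_square)
  finally show ?thesis .
qed

lemma quartic_exponent_limit:
  assumes "bounded K"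
  shows "uniform_limit K
           (\<lambda>n z. of_nat (n - 1) * cumulant r (quarter_scale n * z) - of_real (sqrt (real n)) * r * z ^ 2 / 2)
           (\<lambda>z. (r - 3 * r ^ 3) / 24 * z ^ 4) sequentially"
proof -
  define \<kappa> where "\<kappa> = (r - 3 * r ^ 3) / 24"
  obtain R where R: "R > 0" "\<And>z. z \<in> K \<Longrightarrow> norm z \<le> R"
    using assms unfolding bounded_pos by blast
  define b where "b n = norm r * R ^ 2 / 2 * (1 / sqrt (real n)) + norm \<kappa> * R ^ 4 * (1 / real n)" for n
  have "(\<lambda>n. 1 / sqrt (real n)) \<longlonglongrightarrow> 0" "(\<lambda>n. 1 / real n) \<longlonglongrightarrow> 0"
    by real_asymp+
  then have "b \<longlonglongrightarrow> norm r * R ^ 2 / 2 * 0 + norm \<kappa> * R ^ 4 * 0"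
    unfolding b_def by (intro tendsto_intros)
  then have b: "b \<longlonglongrightarrow> 0" by simp
  show ?thesis
  proof (rule uniform_limit_by_bound[OF _ b])
    show "eventually (\<lambda>n. \<forall>z\<in>K. norm (of_nat (n - 1) * cumulant r (quarter_scale n * z)
            - of_real (sqrt (real n)) * r * z ^ 2 / 2 - (r - 3 * r ^ 3) / 24 * z ^ 4) \<le> b n) sequentially"
      using eventually_ge_at_top[of 1]
    proof eventually_elim
      case (elim n)
      define S where "S = (of_real (sqrt (real n)) :: complex)"
      have S2: "S ^ 2 = of_nat n" using elim by (simp add: S_def flip: of_real_power)
      show ?case
      proof
        fix z assume z: "z \<in> K"
        have "norm (- (r * z ^ 2 / (2 * S)) - \<kappa> * z ^ 4 / S ^ 2)
            \<le> norm r * norm z ^ 2 / 2 * (1 / sqrt (real n)) + norm \<kappa> * norm z ^ 4 * (1 / real n)"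
          using norm_triangle_ineq4[of "- (r * z ^ 2 / (2 * S))" "\<kappa> * z ^ 4 / S ^ 2"]
          by (simp add: S_def norm_mult norm_divide norm_power flip: S2)
        also have "\<dots> \<le> b n"
          unfolding b_def using R(2)[OF z]
          by (intro add_mono mult_right_mono mult_left_mono divide_right_mono power_mono) auto
        finally show "norm (of_nat (n - 1) * cumulant r (quarter_scale n * z)
            - of_real (sqrt (real n)) * r * z ^ 2 / 2 - (r - 3 * r ^ 3) / 24 * z ^ 4) \<le> b n"
          using quartic_exponent_error[OF elim, of r z] by (simp add: S_def \<kappa>_def)
      qed
    qed
  qed
qed

lemma spectral_bounds_near_origin:
  assumes "\<beta> \<ge> 0"
  obtains \<epsilon> \<theta> where "\<epsilon> > 0" "0 \<le> \<theta>" "\<theta> < 1"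
    and "\<And>h. norm h \<le> \<epsilon> \<Longrightarrow> eig_plus \<beta> h \<noteq> eig_minus \<beta> h"
    and "\<And>h. norm h \<le> \<epsilon> \<Longrightarrow> eig_plus \<beta> h \<noteq> 0"
    and "\<And>h. norm h \<le> \<epsilon> \<Longrightarrow> amp_plus \<beta> h \<noteq> 0"
    and "\<And>h. norm h \<le> \<epsilon> \<Longrightarrow> norm (amp_minus \<beta> h / amp_plus \<beta> h) \<le> 1"
    and "\<And>h. norm h \<le> \<epsilon> \<Longrightarrow> norm (eig_minus \<beta> h / eig_plus \<beta> h) \<le> \<theta>"
proof -
  obtain \<epsilon>1 \<theta> where \<epsilon>1: "\<epsilon>1 > 0" "0 \<le> \<theta>" "\<theta> < 1"
    and dom: "\<And>h. norm h \<le> \<epsilon>1 \<Longrightarrow> eig_plus \<beta> h \<noteq> 0 \<and> norm (eig_minus \<beta> h) \<le> \<theta> * norm (eig_plus \<beta> h)"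
    using eig_dominance[OF assms] by blast
  obtain \<epsilon>2 where \<epsilon>2: "\<epsilon>2 > 0"
    and amp: "\<And>h. norm h \<le> \<epsilon>2 \<Longrightarrow> amp_plus \<beta> h \<noteq> 0 \<and> norm (amp_minus \<beta> h / amp_plus \<beta> h) \<le> 1"
    using amp_ratio_bound by blast
  have eig: "eig_plus \<beta> h \<noteq> eig_minus \<beta> h \<and> eig_plus \<beta> h \<noteq> 0 \<and> norm (eig_minus \<beta> h / eig_plus \<beta> h) \<le> \<theta>"
    if "norm h \<le> min \<epsilon>1 \<epsilon>2" for h
  proof -
    have nz: "eig_plus \<beta> h \<noteq> 0" and le: "norm (eig_minus \<beta> h) \<le> \<theta> * norm (eig_plus \<beta> h)"
      using dom that by auto
    then have "norm (eig_minus \<beta> h) < norm (eig_plus \<beta> h)"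
      using \<epsilon>1(3) by (smt (verit) mult_less_cancel_right2 zero_less_norm_iff)
    then show ?thesis using nz le by (auto simp: norm_divide divide_le_eq)
  qed
  show ?thesis
    by (rule that[of "min \<epsilon>1 \<epsilon>2" \<theta>]) (use \<epsilon>1 \<epsilon>2 eig amp in auto)
qed

lemma quartic_coefficient:
  "- of_real ((3 * exp (6 * \<beta>) - exp (2 * \<beta>)) / 24) = (bond_ratio \<beta> - 3 * bond_ratio \<beta> ^ 3) / 24"
proof -
  have "exp (6 * \<beta>) = exp (2 * \<beta>) ^ 3" by (simp flip: exp_of_nat_mult)
  then show ?thesis by (simp add: field_simps)
qed

lemma mgf_factorised_limit:
  assumes "\<beta> \<ge> 0" "compact K"
  shows "uniform_limit K (\<lambda>n z. mgf_factorised \<beta> n (quarter_scale n * z) z)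
           (\<lambda>z. exp ((bond_ratio \<beta> - 3 * bond_ratio \<beta> ^ 3) / 24 * z ^ 4)) sequentially"
proof -
  define r where "r = bond_ratio \<beta>"
  define \<psi> where "\<psi> z = exp ((r - 3 * r ^ 3) / 24 * z ^ 4)" for z
  obtain \<epsilon> \<theta> where \<epsilon>: "\<epsilon> > 0" "0 \<le> \<theta>" "\<theta> < 1"
    and amp: "\<And>h. norm h \<le> \<epsilon> \<Longrightarrow> norm (amp_minus \<beta> h / amp_plus \<beta> h) \<le> 1"
    and eig: "\<And>h. norm h \<le> \<epsilon> \<Longrightarrow> norm (eig_minus \<beta> h / eig_plus \<beta> h) \<le> \<theta>"
    using spectral_bounds_near_origin[OF assms(1)] by metis
  have K: "bounded K" and \<psi>K: "bounded (\<psi> ` K)"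
    using assms(2) unfolding \<psi>_def
    by (auto intro!: compact_imp_bounded compact_continuous_image continuous_intros)
  have "bigo0 (\<lambda>h. amp_plus \<beta> h / 2 - 1) 1"
    using bigo0_mono[OF bigo0_mult[OF bigo0_amp_plus bigo0_const[of "1/2"]]] by (rule bigo0_cong) auto
  note L1 = uniform_limit_rescaled[OF this K quarter_scale_limits(1)]
  have L2: "uniform_limit K (\<lambda>n z. (eig_ratio r (quarter_scale n * z) / exp (cumulant r (quarter_scale n * z))) ^ (n - 1))
      (\<lambda>_. 1) sequentially"
    unfolding r_def
    by (rule uniform_limit_rescaled_power[OF bigo0_eig_ratio_over_exp[OF bond_ratio_plus_1] K quarter_scale_limits])
  have L3: "uniform_limit K (\<lambda>n z. exp (of_nat (n - 1) * cumulant r (quarter_scale n * z)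
      - of_real (sqrt (real n)) * r * z ^ 2 / 2)) \<psi> sequentially"
    unfolding \<psi>_def using assms(2)
    by (intro uniform_limit_exp quartic_exponent_limit K compact_imp_bounded compact_continuous_image
        continuous_intros)
  have L4: "uniform_limit K (\<lambda>n z. 1 + amp_minus \<beta> (quarter_scale n * z) / amp_plus \<beta> (quarter_scale n * z)
      * (eig_minus \<beta> (quarter_scale n * z) / eig_plus \<beta> (quarter_scale n * z)) ^ (n - 1)) (\<lambda>_. 1) sequentially"
    using amp eig by (intro uniform_limit_rescaled_geometric[OF \<epsilon> _ K quarter_scale_limits(1), of _ 1]) auto
  have "uniform_limit K (\<lambda>n z. mgf_factorised \<beta> n (quarter_scale n * z) z) (\<lambda>z. 1 * 1 * \<psi> z * 1) sequentially"
    unfolding mgf_factorised_def r_def[symmetric]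
    using \<psi>K bounded_subset[of "{1}" "(\<lambda>_. 1) ` K"] by (intro uniform_lim_mult L1 L2 L3 L4) auto
  then show ?thesis by (simp add: \<psi>_def r_def)
qed

theorem theorem2p2:
  fixes \<beta> :: real and K :: "complex set"
  assumes "\<beta> \<ge> 0" and "compact K"
  shows "uniform_limit K
     (\<lambda>n z. ising_expect 0 \<beta> n
              (\<lambda>\<sigma>. exp (z * of_real (magnetization n \<sigma> / real n powr (1/4))))
            * exp (- of_real (sqrt (real n) * exp (2 * \<beta>)) * z ^ 2 / 2))
     (\<lambda>z. exp (- of_real ((3 * exp (6 * \<beta>) - exp (2 * \<beta>)) / 24) * z ^ 4))
     sequentially"
proof -
  obtain \<epsilon> where "\<epsilon> > 0"
    and gap: "\<And>h. norm h \<le> \<epsilon> \<Longrightarrow> eig_plus \<beta> h \<noteq> eig_minus \<beta> h"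
    and eig: "\<And>h. norm h \<le> \<epsilon> \<Longrightarrow> eig_plus \<beta> h \<noteq> 0"
    and amp: "\<And>h. norm h \<le> \<epsilon> \<Longrightarrow> amp_plus \<beta> h \<noteq> 0"
    using spectral_bounds_near_origin[OF assms(1)] by metis
  have "eventually (\<lambda>n. \<forall>z\<in>K. norm (quarter_scale n * z) \<le> \<epsilon> \<and> n \<ge> 1) sequentially"
    using rescaled_points_small[OF compact_imp_bounded[OF assms(2)] quarter_scale_limits(1) \<open>\<epsilon> > 0\<close>]
      eventually_ge_at_top[of 1]
    by eventually_elim auto
  then have "eventually (\<lambda>n. \<forall>z\<in>K. mgf_factorised \<beta> n (quarter_scale n * z) z
      = ising_expect 0 \<beta> n (\<lambda>\<sigma>. exp (z * of_real (magnetization n \<sigma> / real n powr (1/4))))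
        * exp (- of_real (sqrt (real n) * exp (2 * \<beta>)) * z ^ 2 / 2)) sequentially"
  proof (rule eventually_mono, intro ballI mgf_factorization[symmetric])
    fix n z assume "\<forall>z\<in>K. norm (quarter_scale n * z) \<le> \<epsilon> \<and> n \<ge> 1" "z \<in> K"
    then show "n \<ge> 1" "eig_plus \<beta> (quarter_scale n * z) \<noteq> eig_minus \<beta> (quarter_scale n * z)"
      "eig_plus \<beta> (quarter_scale n * z) \<noteq> 0" "amp_plus \<beta> (quarter_scale n * z) \<noteq> 0"
      using gap eig amp by auto
  qed
  then show ?thesis
    by (rule uniform_limit_cong[THEN iffD1, OF _ _ mgf_factorised_limit[OF assms]])
      (simp only: quartic_coefficient)
qed
end
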